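(* Assume $F$ is Myerson-regular, i.e. $v(\theta)=\theta-\frac{1-F(\theta)}{f(\theta)}$ is non-decreasing. For each $m\in[0,\int_0^1x\,\mathrm{d}G(x)]$ there exists $\theta^\star_m\in[0,1]$ such that the expected assignment $x^\star_m(\theta)=0$ for $\theta\in[0,\theta^\star_m)$ and $x^\star_m(\theta)=G^{-1}(F(\theta))$ for $\theta\in[\theta^\star_m,1]$ is induced by a mechanism maximizing aggregate effort $\int_\Theta t(\theta)\,\mathrm{d}F(\theta)$ over all mechanisms satisfying (F1),(F2),(IC),(IR). If $m=\int_0^1x\,\mathrm{d}G(x)$ then $\theta^\star_m=0$. Furthermore, $\theta^\star_m$ is non-increasing in $m$, and constraint (F2) binds whenever $I_{G^{-1}}(F(\theta^\star_0))>-m$.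
   Context: Types $\theta\in[0,1]$ with strictly increasing absolutely continuous CDF $F$ with continuous density $f$; prize qualities in $(0,1]$ with CDF $G$ (quality $0$ is the null prize, unlimited supply). A mechanism $(\Gamma,t)$: $\Gamma(\cdot\mid\theta)$ a CDF on $[0,1]$ for each $\theta$, $t(\theta)\ge0$; $x_\Gamma(\theta)=\int_0^1x\,\mathrm{d}\Gamma(x\mid\theta)$. (F1) $\int\Gamma(x\mid\theta)\,\mathrm{d}F(\theta)\ge G(x)$ for all $x$; (F2) $\int x_\Gamma\,\mathrm{d}F\ge m$; (IC) $\theta x_\Gamma(\theta)-t(\theta)\ge\theta x_\Gamma(\theta')-t(\theta')$; (IR) $\theta x_\Gamma(\theta)-t(\theta)\ge0$. $I_{G^{-1}}(q)=\int_0^qG^{-1}(s)\,\mathrm{d}s-\int_0^1G^{-1}(s)\,\mathrm{d}s$. *)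

theory Defs
  imports "HOL-Analysis.Analysis"
begin

definition cdf01 :: "(real \<Rightarrow> real) \<Rightarrow> bool" where
  "cdf01 H \<longleftrightarrow> mono H \<and> (\<forall>x. continuous (at_right x) H)
      \<and> (\<forall>x<0. H x = 0) \<and> (\<forall>x\<ge>1. H x = 1)"

definition cdf_mean :: "(real \<Rightarrow> real) \<Rightarrow> real" where
  "cdf_mean H = integral\<^sup>L (interval_measure H) (\<lambda>x. x)"

definition type_dist :: "(real \<Rightarrow> real) \<Rightarrow> (real \<Rightarrow> real) \<Rightarrow> bool" where
  "type_dist F f \<longleftrightarrow> F 0 = 0 \<and> F 1 = 1 \<and> strict_mono_on {0..1} F
      \<and> continuous_on {0..1} f \<and> (\<forall>\<theta>\<in>{0..1}. f \<theta> \<ge> 0)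
      \<and> (\<forall>\<theta>\<in>{0..1}. (f has_integral F \<theta>) {0..\<theta>})"

text \<open>Expectation with respect to F: the integral of h dF = integral over [0,1] of h f.\<close>
definition EF :: "(real \<Rightarrow> real) \<Rightarrow> (real \<Rightarrow> real) \<Rightarrow> real" where
  "EF f h = integral {0..1} (\<lambda>\<theta>. f \<theta> * h \<theta>)"

definition EF_ok :: "(real \<Rightarrow> real) \<Rightarrow> (real \<Rightarrow> real) \<Rightarrow> bool" where
  "EF_ok f h \<longleftrightarrow> (\<lambda>\<theta>. f \<theta> * h \<theta>) integrable_on {0..1}"

definition myerson_regular :: "(real \<Rightarrow> real) \<Rightarrow> (real \<Rightarrow> real) \<Rightarrow> bool" where
  "myerson_regular F f \<longleftrightarrow> mono_on {0<..<1} (\<lambda>\<theta>. \<theta> - (1 - F \<theta>) / f \<theta>)"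

definition prize_dist :: "(real \<Rightarrow> real) \<Rightarrow> bool" where
  "prize_dist G \<longleftrightarrow> cdf01 G \<and> G 0 = 0"

definition qinv :: "(real \<Rightarrow> real) \<Rightarrow> real \<Rightarrow> real" where
  "qinv G q = Inf {x\<in>{0..1}. q \<le> G x}"

definition I_Ginv :: "(real \<Rightarrow> real) \<Rightarrow> real \<Rightarrow> real" where
  "I_Ginv G q = integral {0..q} (qinv G) - integral {0..1} (qinv G)"

definition xG :: "(real \<Rightarrow> real \<Rightarrow> real) \<Rightarrow> real \<Rightarrow> real" where
  "xG \<Gamma> \<theta> = cdf_mean (\<Gamma> \<theta>)"

text \<open>Feasible mechanisms: (F1), (F2), (IC), (IR), plus the integrals involved exist.\<close>
definition feasible ::
  "(real \<Rightarrow> real) \<Rightarrow> (real \<Rightarrow> real) \<Rightarrow> real \<Rightarrow> (real \<Rightarrow> real \<Rightarrow> real) \<Rightarrow> (real \<Rightarrow> real) \<Rightarrow> bool" where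
  "feasible f G m \<Gamma> t \<longleftrightarrow>
     (\<forall>\<theta>\<in>{0..1}. cdf01 (\<Gamma> \<theta>) \<and> t \<theta> \<ge> 0)
   \<and> (\<forall>x. EF_ok f (\<lambda>\<theta>. \<Gamma> \<theta> x) \<and> EF f (\<lambda>\<theta>. \<Gamma> \<theta> x) \<ge> G x)
   \<and> EF_ok f (xG \<Gamma>) \<and> EF f (xG \<Gamma>) \<ge> m
   \<and> (\<forall>\<theta>\<in>{0..1}. \<forall>\<theta>'\<in>{0..1}. \<theta> * xG \<Gamma> \<theta> - t \<theta> \<ge> \<theta> * xG \<Gamma> \<theta>' - t \<theta>')
   \<and> (\<forall>\<theta>\<in>{0..1}. \<theta> * xG \<Gamma> \<theta> - t \<theta> \<ge> 0)
   \<and> EF_ok f t"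

definition xstar :: "(real \<Rightarrow> real) \<Rightarrow> (real \<Rightarrow> real) \<Rightarrow> real \<Rightarrow> real \<Rightarrow> real" where
  "xstar F G ts \<theta> = (if \<theta> < ts then 0 else qinv G (F \<theta>))"

end

theory Submission
  imports Defs "HOL-Probability.Probability"
begin

text \<open>
  By the envelope formula, a mechanism satisfying (IC) and (IR) has a non-decreasing expected
  assignment \<open>x\<close>, and its effort is at most \<open>\<integral> w x\<close> with virtual surplus
  \<open>w = \<theta> f - (1 - F) = f v\<close>; the envelope transfers attain this bound. Relaxing (F2) with a
  multiplier \<open>l \<ge> 0\<close>, and writing \<open>x\<^sub>\<Gamma>(\<theta>) = 1 - \<integral>\<^sub>0\<^sup>1 \<Gamma>(s|\<theta>) ds\<close>, the Lagrangian
  \<open>\<integral> (w + l f) x\<close> splits into slices \<open>s\<close>, each a bathtub problem under the constraint (F1)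
  at \<open>s\<close>. Because \<open>v\<close> is non-decreasing, every slice is solved by the step function of the
  assignment that excludes types below a cutoff \<open>t\<close> and matches the others assortatively,
  provided \<open>v + l\<close> changes sign at \<open>t\<close>. The expected quality of that assignment is
  \<open>\<integral>\<^bsub>F(t)\<^esub>\<^sup>1 G\<^sup>-\<^sup>1\<close>, continuous and non-increasing in \<open>t\<close>. Taking \<open>t\<close> as the largest cutoff
  in the region \<open>v < 0\<close> that still satisfies (F2), either \<open>t\<close> exhausts that region
  (\<open>l = 0\<close>) or (F2) binds and \<open>l = -v(t)\<close>; weak duality gives optimality, and monotonicity
  and binding follow from the shape of the expected quality.
\<close>

section \<open>Real analysis on the unit interval\<close>

lemma le_of_le_plus_div_nat:
  fixes a b c :: real
  assumes "\<And>n. n > 0 \<Longrightarrow> a \<le> b + c / real n"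
  shows "a \<le> b"
proof (rule ccontr)
  assume "\<not> a \<le> b"
  then have d: "a - b > 0" by simp
  obtain n :: nat where n: "real n > \<bar>c\<bar> / (a - b)" using reals_Archimedean2 by blast
  then have np: "n > 0" using d by (metis abs_ge_zero divide_nonneg_pos of_nat_0_less_iff order_le_less_trans)
  have "\<bar>c\<bar> < (a - b) * real n" using n d by (simp add: divide_less_eq mult.commute)
  then have "\<bar>c\<bar> / real n < a - b" using np by (simp add: divide_less_eq mult.commute)
  moreover have "c / real n \<le> \<bar>c\<bar> / real n" using np by (simp add: divide_right_mono)
  ultimately show False using assms[OF np] by linarith
qed

lemma eq_if_common_approx:
  fixes a b :: real
  assumes "\<And>n. n > 0 \<Longrightarrow> \<bar>a - c n\<bar> \<le> 1 / real n" "\<And>n. n > 0 \<Longrightarrow> \<bar>b - c n\<bar> \<le> 1 / real n"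
  shows "a = b"
proof -
  have "x \<le> y" if x: "\<And>n. n > 0 \<Longrightarrow> \<bar>x - c n\<bar> \<le> 1 / real n"
    and y: "\<And>n. n > 0 \<Longrightarrow> \<bar>y - c n\<bar> \<le> 1 / real n" for x y :: real
  proof (rule le_of_le_plus_div_nat[where c=2])
    fix n :: nat assume "n > 0"
    then show "x \<le> y + 2 / real n" using x[of n] y[of n] by (simp add: abs_le_iff)
  qed
  then show ?thesis using assms by (metis order_antisym)
qed

lemma mono_on_abs_le:
  fixes x :: "real \<Rightarrow> real"
  assumes "mono_on {a..b} x" "s \<in> {a..b}"
  shows "\<bar>x s\<bar> \<le> \<bar>x a\<bar> + \<bar>x b\<bar>"
proof -
  have "x a \<le> x s" "x s \<le> x b" using assms unfolding mono_on_def by auto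
  then show ?thesis by linarith
qed

lemma mono_on_measurable_lebesgue_on:
  fixes x :: "real \<Rightarrow> real"
  assumes "mono_on {a..b} x"
  shows "x \<in> borel_measurable (lebesgue_on {a..b})"
proof -
  have "space lborel = space lebesgue" "sets borel \<subseteq> sets lebesgue"
    by force+
  then show ?thesis
    by (metis assms borel_measurable_mono_on_fnc borel_measurable_subalgebra mono_restrict_space
        space_lborel space_restrict_space)
qed

lemma antimono_on_measurable_lebesgue_on:
  fixes x :: "real \<Rightarrow> real"
  assumes "\<And>u v. u \<in> {a..b} \<Longrightarrow> v \<in> {a..b} \<Longrightarrow> u \<le> v \<Longrightarrow> x v \<le> x u"
  shows "x \<in> borel_measurable (lebesgue_on {a..b})"
proof -
  have "mono_on {a..b} (\<lambda>u. - x u)" using assms unfolding mono_on_def by force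
  from mono_on_measurable_lebesgue_on[OF this] have "(\<lambda>u. - (- x u)) \<in> borel_measurable (lebesgue_on {a..b})"
    by (rule borel_measurable_uminus)
  then show ?thesis by simp
qed

lemma continuous_times_bounded_integrable:
  fixes h c :: "real \<Rightarrow> real"
  assumes h: "h \<in> borel_measurable (lebesgue_on {a..b})"
    and B: "\<And>\<theta>. \<theta> \<in> {a..b} \<Longrightarrow> \<bar>h \<theta>\<bar> \<le> B"
    and c: "continuous_on {a..b} c"
  shows "(\<lambda>\<theta>. c \<theta> * h \<theta>) integrable_on {a..b}"
proof -
  have "bounded (h ` {a..b})" using B unfolding bounded_iff by (intro exI[of _ B]) auto
  moreover have "c absolutely_integrable_on {a..b}"
    using absolutely_integrable_continuous_real[of a b c] c by simp
  ultimately have "(\<lambda>\<theta>. h \<theta> * c \<theta>) absolutely_integrable_on {a..b}"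
    using absolutely_integrable_bounded_measurable_product_real[OF h] by simp
  then show ?thesis using set_lebesgue_integral_eq_integral(1) by (simp add: mult.commute)
qed

lemma continuous_times_mono_integrable:
  fixes x c :: "real \<Rightarrow> real"
  assumes "mono_on {0..1} x" "continuous_on {0..1} c"
  shows "(\<lambda>\<theta>. c \<theta> * x \<theta>) integrable_on {0..1}"
  by (rule continuous_times_bounded_integrable[OF mono_on_measurable_lebesgue_on[OF assms(1)] _ assms(2)])
     (rule mono_on_abs_le[OF assms(1)])

lemma integral_mono_on_bounds:
  fixes x :: "real \<Rightarrow> real"
  assumes mx: "mono_on {a..b} x" and ab: "a \<le> b"
  shows "(b - a) * x a \<le> integral {a..b} x" "integral {a..b} x \<le> (b - a) * x b"
proof -
  have "integral {a..b} (\<lambda>_. x a) \<le> integral {a..b} x"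
    by (rule integral_le[OF integrable_const_ivl integrable_on_mono_on[OF mx]])
       (use mx ab in \<open>auto simp: mono_on_def\<close>)
  then show "(b - a) * x a \<le> integral {a..b} x" using ab by simp
  have "integral {a..b} x \<le> integral {a..b} (\<lambda>_. x b)"
    by (rule integral_le[OF integrable_on_mono_on[OF mx] integrable_const_ivl])
       (use mx ab in \<open>auto simp: mono_on_def\<close>)
  then show "integral {a..b} x \<le> (b - a) * x b" using ab by simp
qed

lemma integral_mono_on_le_riemann_sum:
  fixes g :: "real \<Rightarrow> real"
  assumes g: "mono_on {a..b} g" and ab: "a \<le> b" and n: "n > 0"
  shows "integral {a..b} g \<le> (b - a) / real n * (\<Sum>k<n. g (a + real (Suc k) * (b - a) / real n))"
proof -
  define h where "h = (b - a) / real n"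
  have h: "h \<ge> 0" unfolding h_def using ab by simp
  have p: "a + real j * h \<le> b" if "j \<le> n" for j
  proof -
    have "real j * h \<le> real n * h" using that h by (simp add: mult_right_mono)
    also have "\<dots> = b - a" unfolding h_def using n by simp
    finally show ?thesis by simp
  qed
  have "integral {a..a + real j * h} g \<le> h * (\<Sum>k<j. g (a + real (Suc k) * h))" if "j \<le> n" for j
    using that
  proof (induction j)
    case 0
    then show ?case by simp
  next
    case (Suc j)
    let ?p = "a + real j * h" and ?q = "a + real (Suc j) * h"
    have pq: "a \<le> ?p" "?p \<le> ?q" "?q \<le> b" using h p[of "Suc j"] Suc.prems
      by (auto simp: algebra_simps)
    have int: "g integrable_on {a..?q}"
      by (rule integrable_on_mono_on) (rule mono_on_subset[OF g], use pq in auto)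
    have "integral {a..?q} g = integral {a..?p} g + integral {?p..?q} g"
      using Henstock_Kurzweil_Integration.integral_combine[OF pq(1,2) int] by simp
    also have "integral {?p..?q} g \<le> integral {?p..?q} (\<lambda>_. g ?q)"
    proof (rule integral_le)
      show "g integrable_on {?p..?q}"
        by (rule integrable_on_mono_on) (rule mono_on_subset[OF g], use pq in auto)
      show "(\<lambda>_. g ?q) integrable_on {?p..?q}" by (rule integrable_const_ivl)
      fix u assume "u \<in> {?p..?q}"
      then show "g u \<le> g ?q" using g pq unfolding mono_on_def by auto
    qed
    also have "integral {?p..?q} (\<lambda>_. g ?q) = h * g ?q" using pq h by (simp add: algebra_simps)
    finally show ?case using Suc by (simp add: algebra_simps)
  qed
  note main = this[of n]
  have e1: "a + real n * h = b" unfolding h_def using n by simp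
  have e2: "\<And>k. a + real (Suc k) * h = a + real (Suc k) * (b - a) / real n" unfolding h_def by simp
  from main show ?thesis unfolding e1 e2 by (simp add: h_def)
qed

lemma bathtub_inequality:
  fixes c f g h :: "real \<Rightarrow> real"
  assumes "(\<lambda>\<theta>. c \<theta> * g \<theta>) integrable_on {0..1}" "(\<lambda>\<theta>. c \<theta> * h \<theta>) integrable_on {0..1}"
    "(\<lambda>\<theta>. f \<theta> * g \<theta>) integrable_on {0..1}" "(\<lambda>\<theta>. f \<theta> * h \<theta>) integrable_on {0..1}"
    and finite: "finite N"
    and pw: "\<And>\<theta>. \<theta> \<in> {0..1} - N \<Longrightarrow> 0 \<le> (c \<theta> - \<kappa> * f \<theta>) * (h \<theta> - g \<theta>)"
  shows "integral {0..1} (\<lambda>\<theta>. c \<theta> * g \<theta>) - \<kappa> * integral {0..1} (\<lambda>\<theta>. f \<theta> * g \<theta>)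
    \<le> integral {0..1} (\<lambda>\<theta>. c \<theta> * h \<theta>) - \<kappa> * integral {0..1} (\<lambda>\<theta>. f \<theta> * h \<theta>)"
proof -
  let ?d = "\<lambda>\<theta>. (c \<theta> * h \<theta> - c \<theta> * g \<theta>) - \<kappa> * (f \<theta> * h \<theta> - f \<theta> * g \<theta>)"
  have i: "?d integrable_on {0..1}" using assms(1-4) by (intro integrable_diff integrable_on_mult_right)
  have "0 \<le> integral {0..1} (\<lambda>\<theta>. if \<theta> \<in> N then 0 else ?d \<theta>)"
  proof (rule integral_nonneg)
    show "(\<lambda>\<theta>. if \<theta> \<in> N then 0 else ?d \<theta>) integrable_on {0..1}"
      by (rule integrable_spike_finite[OF finite _ i]) auto
    show "0 \<le> (if \<theta> \<in> N then 0 else ?d \<theta>)" if "\<theta> \<in> {0..1}" for \<theta>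
      using pw[of \<theta>] that by (auto simp: algebra_simps)
  qed
  also have "integral {0..1} (\<lambda>\<theta>. if \<theta> \<in> N then 0 else ?d \<theta>) = integral {0..1} ?d"
    by (rule integral_spike[OF negligible_finite[OF finite]]) auto
  also have "\<dots> = integral {0..1} (\<lambda>\<theta>. c \<theta> * h \<theta> - c \<theta> * g \<theta>)
      - \<kappa> * integral {0..1} (\<lambda>\<theta>. f \<theta> * h \<theta> - f \<theta> * g \<theta>)"
    using assms(1-4) by (subst integral_diff) (auto intro!: integrable_diff integrable_on_mult_right)
  also have "\<dots> = (integral {0..1} (\<lambda>\<theta>. c \<theta> * h \<theta>) - integral {0..1} (\<lambda>\<theta>. c \<theta> * g \<theta>))
      - \<kappa> * (integral {0..1} (\<lambda>\<theta>. f \<theta> * h \<theta>) - integral {0..1} (\<lambda>\<theta>. f \<theta> * g \<theta>))"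
    using assms(1-4) by (simp add: integral_diff)
  finally show ?thesis by (simp add: algebra_simps)
qed

lemma triangle_kernel_integrable:
  fixes g h :: "real \<Rightarrow> real"
  assumes [measurable]: "g \<in> borel_measurable borel" "h \<in> borel_measurable borel"
    and gA: "\<And>\<theta>. \<bar>g \<theta>\<bar> \<le> A" and hB: "\<And>s. \<bar>h s\<bar> \<le> B"
    and g0: "\<And>\<theta>. \<theta> \<notin> {0..1} \<Longrightarrow> g \<theta> = 0" and h0: "\<And>s. s \<notin> {0..1} \<Longrightarrow> h s = 0"
  shows "integrable (lborel \<Otimes>\<^sub>M lborel) (\<lambda>(\<theta>, s). g \<theta> * h s * (if s \<le> \<theta> then 1 else 0))"
proof (rule integrableI_bounded_set[where A="{0..1} \<times> {0..1}" and B="A * B"])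
  have s01: "{0..1::real} \<in> sets lborel" by simp
  show "{0..1::real} \<times> {0..1::real} \<in> sets (lborel \<Otimes>\<^sub>M lborel)" by (rule pair_measureI[OF s01 s01])
  show "emeasure (lborel \<Otimes>\<^sub>M lborel) ({0..1::real} \<times> {0..1::real}) < \<infinity>"
    by (simp add: lborel.emeasure_pair_measure_Times[OF s01 s01])
  show "(\<lambda>(\<theta>, s). g \<theta> * h s * (if s \<le> \<theta> then 1 else 0)) \<in> borel_measurable (lborel \<Otimes>\<^sub>M lborel)"
    by measurable
  have "\<bar>g \<theta>\<bar> * \<bar>h s\<bar> \<le> A * B" for \<theta> s
    by (rule mult_mono[OF gA hB]) (use gA[of \<theta>] in auto)
  then show "AE p in lborel \<Otimes>\<^sub>M lborel. p \<in> {0..1} \<times> {0..1} \<longrightarrow>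
      norm (case p of (\<theta>, s) \<Rightarrow> g \<theta> * h s * (if s \<le> \<theta> then 1 else 0)) \<le> A * B"
    using order_trans[OF _ mult_nonneg_nonneg[OF order_trans[OF abs_ge_zero gA] order_trans[OF abs_ge_zero hB]]]
    by (intro AE_I2) (auto simp: abs_mult)
  show "AE p in lborel \<Otimes>\<^sub>M lborel. p \<notin> {0..1} \<times> {0..1} \<longrightarrow>
      (case p of (\<theta>, s) \<Rightarrow> g \<theta> * h s * (if s \<le> \<theta> then 1 else 0)) = 0"
  proof (intro AE_I2 impI)
    fix p :: "real \<times> real" assume "p \<notin> {0..1} \<times> {0..1}"
    moreover obtain \<theta> s where p: "p = (\<theta>, s)" by fastforce
    ultimately have "g \<theta> = 0 \<or> h s = 0" using g0[of \<theta>] h0[of s] by auto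
    then show "(case p of (\<theta>, s) \<Rightarrow> g \<theta> * h s * (if s \<le> \<theta> then 1 else 0)) = 0" using p by auto
  qed
qed

lemma set_borel_integral_bounded_eq_integral:
  fixes g :: "real \<Rightarrow> real"
  assumes meas: "(\<lambda>s. indicator {a..b} s * g s) \<in> borel_measurable borel"
    and gB: "\<And>s. s \<in> {a..b} \<Longrightarrow> \<bar>g s\<bar> \<le> B"
  shows "(\<integral>s. indicator {a..b} s * g s \<partial>lborel) = integral {a..b} g"
proof -
  have "integrable lborel (\<lambda>s. indicator {a..b} s * g s)"
    by (rule integrableI_bounded_set[where A="{a..b}" and B=B])
      (use meas gB in \<open>auto simp: indicator_def emeasure_lborel_Icc_eq\<close>)
  then have "set_integrable lborel {a..b} g" by (simp add: set_integrable_def)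
  from set_borel_integral_eq_integral(2)[OF this] show ?thesis by (simp add: set_lebesgue_integral_def)
qed

lemma lborel_integral_swap_triangle:
  fixes g h :: "real \<Rightarrow> real"
  assumes [measurable]: "g \<in> borel_measurable borel" "h \<in> borel_measurable borel"
    and gA: "\<And>\<theta>. \<bar>g \<theta>\<bar> \<le> A" and hB: "\<And>s. \<bar>h s\<bar> \<le> B"
    and g0: "\<And>\<theta>. \<theta> \<notin> {0..1} \<Longrightarrow> g \<theta> = 0" and h0: "\<And>s. s \<notin> {0..1} \<Longrightarrow> h s = 0"
  shows "(\<integral>\<theta>. g \<theta> * (\<integral>s. indicator {0..\<theta>} s * h s \<partial>lborel) \<partial>lborel)
    = (\<integral>s. h s * (\<integral>\<theta>. indicator {s..1} \<theta> * g \<theta> \<partial>lborel) \<partial>lborel)"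
proof -
  have K: "g \<theta> * h s * (if s \<le> \<theta> then 1 else 0) = g \<theta> * (indicator {0..\<theta>} s * h s)"
    "g \<theta> * h s * (if s \<le> \<theta> then 1 else 0) = h s * (indicator {s..1} \<theta> * g \<theta>)" for \<theta> s
    using g0[of \<theta>] h0[of s] by (auto simp: indicator_def)
  have "(\<integral>s. g \<theta> * h s * (if s \<le> \<theta> then 1 else 0) \<partial>lborel)
      = g \<theta> * (\<integral>s. indicator {0..\<theta>} s * h s \<partial>lborel)" for \<theta>
    by (simp add: K(1))
  moreover have "(\<integral>\<theta>. g \<theta> * h s * (if s \<le> \<theta> then 1 else 0) \<partial>lborel)
      = h s * (\<integral>\<theta>. indicator {s..1} \<theta> * g \<theta> \<partial>lborel)" for s
    by (simp add: K(2))
  ultimately show ?thesis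
    using lborel_pair.Fubini_integral[OF triangle_kernel_integrable[OF assms]] by simp
qed

lemma integral_swap_triangle:
  fixes f x :: "real \<Rightarrow> real"
  assumes f: "continuous_on {0..1} f" and mx: "mono_on {0..1} x"
  shows "integral {0..1} (\<lambda>\<theta>. f \<theta> * integral {0..\<theta>} x) = integral {0..1} (\<lambda>s. x s * integral {s..1} f)"
proof -
  obtain A where A: "\<And>\<theta>. \<theta> \<in> {0..1} \<Longrightarrow> \<bar>f \<theta>\<bar> \<le> A"
    using compact_imp_bounded[OF compact_continuous_image[OF f compact_Icc]]
    unfolding bounded_iff by fastforce
  define B where "B = \<bar>x 0\<bar> + \<bar>x 1\<bar>"
  have xB: "\<And>s. s \<in> {0..1} \<Longrightarrow> \<bar>x s\<bar> \<le> B" unfolding B_def using mono_on_abs_le[OF mx] by blast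
  define xb where "xb s = indicator {0..1} s * x s" for s
  define fb where "fb s = indicator {0..1} s * f s" for s
  define X where "X \<theta> = integral {0..\<theta>} x" for \<theta>
  define Y where "Y s = integral {s..1} f" for s
  have Xc: "continuous_on {0..1} X"
    unfolding X_def by (rule indefinite_integral_continuous_1) (rule integrable_on_mono_on[OF mx])
  have Yc: "continuous_on {0..1} Y"
    unfolding Y_def by (rule indefinite_integral_continuous_1') (rule integrable_continuous_interval[OF f])
  have xbm[measurable]: "xb \<in> borel_measurable borel"
    using borel_measurable_mono_on_fnc[OF mx] borel_measurable_restrict_space_iff[of "{0..1}" borel x]
    unfolding xb_def by simp
  have fbm[measurable]: "fb \<in> borel_measurable borel"
    unfolding fb_def using borel_measurable_continuous_on_indicator[OF _ f] by simp
  have AB: "0 \<le> A" "0 \<le> B" using A[of 0] xB[of 0] by auto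
  then have fbA: "\<bar>fb \<theta>\<bar> \<le> A" and xbB: "\<bar>xb s\<bar> \<le> B" for \<theta> s
    using A[of \<theta>] xB[of s] by (auto simp: fb_def xb_def indicator_def)
  have "(\<integral>s. indicator {0..\<theta>} s * xb s \<partial>lborel) = X \<theta>" if "\<theta> \<in> {0..1}" for \<theta>
  proof -
    have "(\<integral>s. indicator {0..\<theta>} s * xb s \<partial>lborel) = integral {0..\<theta>} xb"
      by (rule set_borel_integral_bounded_eq_integral[where B=B], measurable) (use xbB in auto)
    also have "\<dots> = X \<theta>" unfolding X_def by (rule integral_cong) (use that in \<open>auto simp: xb_def\<close>)
    finally show ?thesis .
  qed
  then have "(\<integral>\<theta>. fb \<theta> * (\<integral>s. indicator {0..\<theta>} s * xb s \<partial>lborel) \<partial>lborel)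
      = (\<integral>\<theta>. indicator {0..1} \<theta> * (f \<theta> * X \<theta>) \<partial>lborel)"
    by (intro Bochner_Integration.integral_cong) (auto simp: fb_def indicator_def)
  also have "\<dots> = integral {0..1} (\<lambda>\<theta>. f \<theta> * X \<theta>)"
    using compact_imp_bounded[OF compact_continuous_image[OF continuous_on_mult[OF f Xc] compact_Icc]]
      borel_measurable_continuous_on_indicator[OF _ continuous_on_mult[OF f Xc]]
    unfolding bounded_iff by (auto intro!: set_borel_integral_bounded_eq_integral)
  finally have lhs: "(\<integral>\<theta>. fb \<theta> * (\<integral>s. indicator {0..\<theta>} s * xb s \<partial>lborel) \<partial>lborel)
      = integral {0..1} (\<lambda>\<theta>. f \<theta> * X \<theta>)" .
  have "(\<integral>\<theta>. indicator {s..1} \<theta> * fb \<theta> \<partial>lborel) = Y s" if "s \<in> {0..1}" for s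
  proof -
    have "(\<integral>\<theta>. indicator {s..1} \<theta> * fb \<theta> \<partial>lborel) = integral {s..1} fb"
      by (rule set_borel_integral_bounded_eq_integral[where B=A], measurable) (use fbA in auto)
    also have "\<dots> = Y s" unfolding Y_def by (rule integral_cong) (use that in \<open>auto simp: fb_def\<close>)
    finally show ?thesis .
  qed
  then have "(\<integral>s. xb s * (\<integral>\<theta>. indicator {s..1} \<theta> * fb \<theta> \<partial>lborel) \<partial>lborel)
      = (\<integral>s. indicator {0..1} s * (x s * Y s) \<partial>lborel)"
    by (intro Bochner_Integration.integral_cong) (auto simp: xb_def indicator_def)
  also have "\<dots> = integral {0..1} (\<lambda>s. x s * Y s)"
  proof -
    obtain C where C: "\<And>s. s \<in> {0..1} \<Longrightarrow> \<bar>Y s\<bar> \<le> C"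
      using compact_imp_bounded[OF compact_continuous_image[OF Yc compact_Icc]]
      unfolding bounded_iff by fastforce
    have "(\<lambda>s. indicator {0..1} s * (x s * Y s)) = (\<lambda>s. xb s * (indicator {0..1} s * Y s))"
      by (auto simp: xb_def indicator_def)
    moreover have "(\<lambda>s. xb s * (indicator {0..1} s * Y s)) \<in> borel_measurable borel"
      using borel_measurable_continuous_on_indicator[OF _ Yc] by simp
    ultimately show ?thesis
      by (intro set_borel_integral_bounded_eq_integral[where B="B * C"])
         (use mult_mono[OF xB C] AB in \<open>auto simp: abs_mult\<close>)
  qed
  finally show ?thesis
    using lborel_integral_swap_triangle[OF fbm xbm fbA xbB] lhs unfolding X_def Y_def
    by (simp add: fb_def xb_def)
qed

section \<open>Type and prize distributions\<close>

lemma type_distD: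
  assumes "type_dist F f"
  shows "F 0 = 0" "F 1 = 1" "strict_mono_on {0..1} F" "continuous_on {0..1} f"
    "\<And>\<theta>. \<theta> \<in> {0..1} \<Longrightarrow> f \<theta> \<ge> 0"
    "\<And>\<theta>. \<theta> \<in> {0..1} \<Longrightarrow> (f has_integral F \<theta>) {0..\<theta>}"
  using assms unfolding type_dist_def by auto

lemma type_dist_has_integral_diff:
  assumes "type_dist F f" "0 \<le> a" "a \<le> b" "b \<le> 1"
  shows "(f has_integral (F b - F a)) {a..b}"
proof -
  have ib: "(f has_integral F b) {0..b}" and ia: "(f has_integral F a) {0..a}"
    using type_distD(6)[OF assms(1)] assms by auto
  have "f integrable_on {a..b}"
    by (rule integrable_subinterval_real[of _ 0 b]) (use ib assms in auto)
  then have iab: "(f has_integral integral {a..b} f) {a..b}" by blast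
  from has_integral_combine[OF assms(2,3) ia this]
  have "F a + integral {a..b} f = F b" using ib has_integral_unique by blast
  then show ?thesis using iab by (metis add_diff_cancel_left')
qed

lemma type_dist_less_iff:
  assumes "type_dist F f" "a \<in> {0..1}" "b \<in> {0..1}"
  shows "F a < F b \<longleftrightarrow> a < b" "F a \<le> F b \<longleftrightarrow> a \<le> b"
proof -
  have *: "\<And>x y. x \<in> {0..1} \<Longrightarrow> y \<in> {0..1} \<Longrightarrow> x < y \<Longrightarrow> F x < F y"
    using strict_mono_onD[OF type_distD(3)[OF assms(1)]] by blast
  show "F a < F b \<longleftrightarrow> a < b"
    using *[of a b] *[of b a] assms(2,3) by (cases a b rule: linorder_cases) auto
  show "F a \<le> F b \<longleftrightarrow> a \<le> b"
    using *[of a b] *[of b a] assms(2,3) by (cases a b rule: linorder_cases) auto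
qed

lemma type_dist_mono:
  assumes "type_dist F f" "0 \<le> a" "a \<le> b" "b \<le> 1"
  shows "F a \<le> F b"
  using type_dist_less_iff(2)[OF assms(1), of a b] assms by auto

lemma type_dist_range:
  assumes "type_dist F f" "0 \<le> a" "a \<le> 1"
  shows "0 \<le> F a" "F a \<le> 1"
  using type_dist_mono[OF assms(1), of 0 a] type_dist_mono[OF assms(1), of a 1] assms
    type_distD(1,2)[OF assms(1)] by auto

lemma type_dist_continuous: "type_dist F f \<Longrightarrow> continuous_on {0..1} F"
proof -
  assume td: "type_dist F f"
  have "continuous_on {0..1} (\<lambda>\<theta>. integral {0..\<theta>} f)"
    by (rule indefinite_integral_continuous_1) (use type_distD(6)[OF td, of 1] in auto)
  moreover have "\<And>\<theta>. \<theta> \<in> {0..1} \<Longrightarrow> integral {0..\<theta>} f = F \<theta>"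
    using type_distD(6)[OF td] by (simp add: integral_unique)
  ultimately show ?thesis by (rule continuous_on_eq)
qed

lemma type_dist_surj:
  assumes "type_dist F f" "0 \<le> y" "y \<le> 1"
  obtains c where "c \<in> {0..1}" "F c = y"
  using IVT'[of F 0 y 1] type_dist_continuous[OF assms(1)] type_distD(1,2)[OF assms(1)] assms by auto

lemma type_dist_density_bounded:
  assumes "type_dist F f"
  obtains M where "M > 0" "\<And>\<theta>. \<theta> \<in> {0..1} \<Longrightarrow> \<bar>f \<theta>\<bar> \<le> M"
proof -
  have "compact (f ` {0..1})"
    using type_distD(4)[OF assms] compact_continuous_image compact_Icc by blast
  then obtain M where "\<forall>y\<in>f ` {0..1}. norm y \<le> M" using compact_imp_bounded bounded_iff by metis
  then have "\<And>\<theta>. \<theta> \<in> {0..1} \<Longrightarrow> \<bar>f \<theta>\<bar> \<le> max M 1"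
    by (metis image_eqI real_norm_def max.coboundedI1)
  then show ?thesis using that[of "max M 1"] by auto
qed

lemma type_dist_lipschitz:
  assumes "type_dist F f" "\<And>\<theta>. \<theta> \<in> {0..1} \<Longrightarrow> \<bar>f \<theta>\<bar> \<le> M" "0 \<le> a" "a \<le> b" "b \<le> 1"
  shows "F b - F a \<le> M * (b - a)"
proof -
  have "integral {a..b} f \<le> integral {a..b} (\<lambda>_. M)"
    using type_dist_has_integral_diff[OF assms(1,3,4,5)] assms(2-5)
    by (intro integral_le) (auto simp: abs_le_iff)
  then show ?thesis
    using type_dist_has_integral_diff[OF assms(1,3,4,5)] assms by (simp add: integral_unique mult.commute)
qed

lemma type_dist_density_somewhere_pos:
  assumes td: "type_dist F f" and ab: "0 \<le> a" "a < b" "b \<le> 1"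
  obtains y where "y \<in> {a..b}" "f y > 0"
proof -
  have "\<exists>y\<in>{a..b}. f y > 0"
  proof (rule ccontr)
    assume none: "\<not> (\<exists>y\<in>{a..b}. f y > 0)"
    have "f y = 0" if y: "y \<in> {a..b}" for y
    proof -
      have "0 \<le> f y" using type_distD(5)[OF td, of y] y ab by simp
      moreover have "\<not> f y > 0" using none y by blast
      ultimately show ?thesis by simp
    qed
    then have "(f has_integral 0) {a..b}" by (intro has_integral_is_0) auto
    moreover have "(f has_integral (F b - F a)) {a..b}"
      using type_dist_has_integral_diff[OF td] ab by simp
    ultimately have "F b - F a = 0" by (metis has_integral_unique)
    then show False using type_dist_less_iff(1)[OF td, of a b] ab by auto
  qed
  then show thesis using that by blast
qed

text \<open>Because \<open>x / 0 = 0\<close> in HOL, the virtual value at a zero \<open>\<theta>\<^sub>0\<close> of \<open>f\<close> equals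
  \<open>\<theta>\<^sub>0\<close>, while just to the right of \<open>\<theta>\<^sub>0\<close> the density is small but positive and the
  virtual value is very negative; regularity therefore forces \<open>f > 0\<close> on \<open>(0,1)\<close>.\<close>
lemma regular_density_pos:
  assumes td: "type_dist F f" and mr: "myerson_regular F f" and th: "\<theta>0 \<in> {0<..<1}"
  shows "f \<theta>0 > 0"
proof (rule ccontr)
  assume "\<not> f \<theta>0 > 0"
  then have f0: "f \<theta>0 = 0" using type_distD(5)[OF td, of \<theta>0] th by auto
  define \<theta>1 where "\<theta>1 = (\<theta>0 + 1) / 2"
  have th1: "\<theta>0 < \<theta>1" "\<theta>1 < 1" using th by (auto simp: \<theta>1_def)
  define c where "c = 1 - F \<theta>1"
  have c: "c > 0"
    using type_dist_less_iff(1)[OF td, of \<theta>1 1] th th1 type_distD(2)[OF td] by (simp add: c_def)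
  have "continuous (at \<theta>0 within {0..1}) f" using type_distD(4)[OF td] th
    by (simp add: continuous_on_eq_continuous_within)
  then obtain d where d: "d > 0" "\<And>y. y \<in> {0..1} \<Longrightarrow> \<bar>y - \<theta>0\<bar> < d \<Longrightarrow> \<bar>f y - f \<theta>0\<bar> < c"
    using c unfolding continuous_within_eps_delta dist_real_def by metis
  obtain y where y: "y \<in> {\<theta>0..min (\<theta>0 + d/2) \<theta>1}" "f y > 0"
    by (rule type_dist_density_somewhere_pos[OF td, of \<theta>0 "min (\<theta>0 + d/2) \<theta>1"]) (use th th1 d(1) in auto)
  have "y \<noteq> \<theta>0" using y(2) f0 by auto
  then have yin: "y \<in> {0<..<1}" "\<theta>0 < y" "y \<le> \<theta>1" "f y < c"
    using y f0 th th1 d(1) d(2)[of y] by auto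
  have "\<theta>0 - (1 - F \<theta>0) / f \<theta>0 \<le> y - (1 - F y) / f y"
    using mr th yin unfolding myerson_regular_def mono_on_def by auto
  then have "(1 - F y) / f y \<le> y - \<theta>0" using f0 by simp
  then have "1 - F y \<le> (y - \<theta>0) * f y" using y(2) by (simp add: pos_divide_le_eq)
  also have "\<dots> < 1 * f y" by (rule mult_strict_right_mono) (use yin th y(2) in auto)
  also have "\<dots> < c" using yin(4) by simp
  also have "c \<le> 1 - F y" using type_dist_mono[OF td, of y \<theta>1] yin th1 by (auto simp: c_def)
  finally show False by simp
qed

lemma type_dist_uniform: "type_dist (\<lambda>\<theta>. \<theta>) (\<lambda>_. 1)"
proof -
  have "((\<lambda>_. 1) has_integral \<theta>) {0..\<theta>}" if "\<theta> \<in> {0..1}" for \<theta> :: real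
    using has_integral_const_real[of "1::real" 0 \<theta>] that by simp
  then show ?thesis unfolding type_dist_def by (simp add: strict_mono_on_def)
qed

lemma integral_density_times_cumulative:
  fixes F f x :: "real \<Rightarrow> real"
  assumes td: "type_dist F f" and mx: "mono_on {0..1} x"
  shows "integral {0..1} (\<lambda>\<theta>. f \<theta> * integral {0..\<theta>} x) = integral {0..1} (\<lambda>s. (1 - F s) * x s)"
proof -
  have "integral {s..1} f = 1 - F s" if "s \<in> {0..1}" for s
    using type_dist_has_integral_diff[OF td, of s 1] type_distD(2)[OF td] that by (simp add: integral_unique)
  then show ?thesis
    unfolding integral_swap_triangle[OF type_distD(4)[OF td] mx]
    by (intro integral_cong) (simp add: mult.commute)
qed

lemma measurable_of_density_times_integrable:
  assumes td: "type_dist F f" and mr: "myerson_regular F f"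
    and i: "(\<lambda>\<theta>. f \<theta> * g \<theta>) integrable_on {0..1}"
  shows "g \<in> borel_measurable (lebesgue_on {0..1})"
proof -
  have m1: "(\<lambda>\<theta>. f \<theta> * g \<theta>) \<in> borel_measurable (lebesgue_on {0..1})"
    using integrable_imp_measurable[OF i] .
  have m2: "f \<in> borel_measurable (lebesgue_on {0..1})"
    using continuous_imp_measurable_on_sets_lebesgue[OF type_distD(4)[OF td]] by simp
  have s0: "{0::real} \<inter> space (lebesgue_on {0..1}) \<in> sets (lebesgue_on {0..1})"
    by (auto simp: sets_restrict_space_iff)
  have s1: "{1::real} \<inter> space (lebesgue_on {0..1}) \<in> sets (lebesgue_on {0..1})"
    by (auto simp: sets_restrict_space_iff)
  have m4: "(\<lambda>\<theta>. (f \<theta> * g \<theta>) / f \<theta>) \<in> borel_measurable (lebesgue_on {0..1})"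
    using m1 m2 by (rule borel_measurable_divide)
  have m3: "(\<lambda>\<theta>. if \<theta> \<in> {0} then g 0 else if \<theta> \<in> {1} then g 1 else (f \<theta> * g \<theta>) / f \<theta>)
      \<in> borel_measurable (lebesgue_on {0..1})"
    by (rule measurable_If_set[OF measurable_const measurable_If_set[OF measurable_const m4 s1] s0]) auto
  have eq: "(if \<theta> \<in> {0} then g 0 else if \<theta> \<in> {1} then g 1 else (f \<theta> * g \<theta>) / f \<theta>) = g \<theta>"
    if "\<theta> \<in> space (lebesgue_on {0..1})" for \<theta>
  proof -
    have "\<theta> \<in> {0..1}" using that by simp
    then consider "\<theta> = 0" | "\<theta> = 1" | "\<theta> \<in> {0<..<1}" by fastforce
    then show ?thesis
    proof cases
      case 3
      then have "f \<theta> > 0" using regular_density_pos[OF td mr] by blast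
      then show ?thesis using 3 by auto
    qed auto
  qed
  show ?thesis
    by (rule measurable_cong_simp[THEN iffD1, OF refl refl _ m3]) (rule eq)
qed

lemma cdf01_mono: "cdf01 H \<Longrightarrow> x \<le> y \<Longrightarrow> H x \<le> H y"
  unfolding cdf01_def mono_def by blast

lemma cdf01_range:
  assumes "cdf01 H" shows "0 \<le> H y" "H y \<le> 1"
proof -
  have "H (min y (-1)) \<le> H y" "H y \<le> H (max y 1)" using cdf01_mono[OF assms] by auto
  moreover have "H (min y (-1)) = 0" "H (max y 1) = 1" using assms unfolding cdf01_def by auto
  ultimately show "0 \<le> H y" "H y \<le> 1" by auto
qed

lemma prize_distD:
  assumes "prize_dist G"
  shows "cdf01 G" "G 0 = 0" "\<And>x y. x \<le> y \<Longrightarrow> G x \<le> G y" "\<And>y. 0 \<le> G y" "\<And>y. G y \<le> 1"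
    "\<And>y. continuous (at_right y) G" "G 1 = 1"
  using assms cdf01_range[of G] cdf01_mono[of G] unfolding prize_dist_def cdf01_def by auto

lemma qinv_range:
  assumes "prize_dist G" "q \<le> 1"
  shows "0 \<le> qinv G q" "qinv G q \<le> 1"
proof -
  let ?S = "{x\<in>{0..1}. q \<le> G x}"
  have "1 \<in> ?S" using prize_distD(7)[OF assms(1)] assms by auto
  then show "qinv G q \<le> 1" unfolding qinv_def by (intro cInf_lower) (auto intro: bdd_belowI[of _ 0])
  show "0 \<le> qinv G q" unfolding qinv_def using \<open>1 \<in> ?S\<close> by (intro cInf_greatest) auto
qed

lemma qinv_le_iff:
  assumes pG: "prize_dist G" and q: "q \<le> 1" and s: "s \<in> {0..1}"
  shows "qinv G q \<le> s \<longleftrightarrow> q \<le> G s"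
proof
  let ?S = "{x\<in>{0..1}. q \<le> G x}"
  have ne: "?S \<noteq> {}" and bdd: "bdd_below ?S"
    using prize_distD(7)[OF pG] q by (auto intro!: bdd_belowI[of _ 0])
  assume "q \<le> G s" then show "qinv G q \<le> s" unfolding qinv_def using s bdd by (intro cInf_lower) auto
next
  let ?S = "{x\<in>{0..1}. q \<le> G x}"
  let ?i = "qinv G q"
  have ne: "?S \<noteq> {}" and bdd: "bdd_below ?S"
    using prize_distD(7)[OF pG] q by (auto intro!: bdd_belowI[of _ 0])
  assume le: "qinv G q \<le> s"
  have ev: "eventually (\<lambda>x. q \<le> G x) (at_right ?i)"
  proof -
    have "q \<le> G x" if xi: "x > ?i" for x
    proof -
      have "Inf ?S < x" using xi unfolding qinv_def .
      from cInf_lessD[OF ne this] obtain y where "y \<in> ?S" "y < x" by blast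
      then show ?thesis using prize_distD(3)[OF pG, of y x] by auto
    qed
    then show ?thesis unfolding eventually_at_right_field by (intro exI[of _ "?i + 1"]) auto
  qed
  have "(G \<longlongrightarrow> G ?i) (at_right ?i)"
    using prize_distD(6)[OF pG, of ?i] by (simp add: continuous_within)
  then have "q \<le> G ?i" by (rule tendsto_lowerbound[OF _ ev]) simp
  then show "q \<le> G s" using prize_distD(3)[OF pG le] by simp
qed

lemma qinv_self: "prize_dist G \<Longrightarrow> q \<le> 1 \<Longrightarrow> q \<le> G (qinv G q)"
  using qinv_le_iff[of G q "qinv G q"] qinv_range[of G q] by auto

lemma qinv_mono:
  assumes "prize_dist G" "q1 \<le> q2" "q2 \<le> 1"
  shows "qinv G q1 \<le> qinv G q2"
  using qinv_le_iff[OF assms(1), of q1 "qinv G q2"] qinv_self[OF assms(1,3)] qinv_range[OF assms(1,3)] assms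
  by auto

lemma qinv_mono_on: "prize_dist G \<Longrightarrow> mono_on {0..1} (qinv G)"
  unfolding mono_on_def using qinv_mono by auto

lemma qinv_integrable: "prize_dist G \<Longrightarrow> 0 \<le> a \<Longrightarrow> b \<le> 1 \<Longrightarrow> qinv G integrable_on {a..b}"
  by (rule integrable_on_mono_on, rule mono_on_subset[OF qinv_mono_on]) auto

lemma I_Ginv_eq:
  assumes pG: "prize_dist G" and q: "q \<in> {0..1}"
  shows "I_Ginv G q = - integral {q..1} (qinv G)"
  using Henstock_Kurzweil_Integration.integral_combine[of 0 q 1 "qinv G"] qinv_integrable[OF pG, of 0 1] q
  unfolding I_Ginv_def by auto

definition dirac_cdf :: "real \<Rightarrow> real \<Rightarrow> real" where
  "dirac_cdf a = (\<lambda>y. if a \<le> y then 1 else 0)"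

lemma cdf01_dirac_cdf:
  assumes "0 \<le> a" "a \<le> 1"
  shows "cdf01 (dirac_cdf a)"
  unfolding cdf01_def
proof (intro conjI allI impI)
  show "mono (dirac_cdf a)" unfolding mono_def dirac_cdf_def by auto
  fix x
  show "continuous (at_right x) (dirac_cdf a)"
    unfolding continuous_within
  proof (rule tendsto_eventually)
    show "\<forall>\<^sub>F y in at_right x. dirac_cdf a y = dirac_cdf a x"
      unfolding eventually_at_right_field
    proof (cases "a \<le> x")
      case True
      then show "\<exists>b>x. \<forall>y>x. y < b \<longrightarrow> dirac_cdf a y = dirac_cdf a x"
        by (intro exI[of _ "x+1"]) (auto simp: dirac_cdf_def)
    next
      case False
      then show "\<exists>b>x. \<forall>y>x. y < b \<longrightarrow> dirac_cdf a y = dirac_cdf a x"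
        by (intro exI[of _ a]) (auto simp: dirac_cdf_def)
    qed
  qed
qed (use assms in \<open>auto simp: dirac_cdf_def\<close>)

lemma cdf01_tendsto:
  assumes "cdf01 H"
  shows "(H \<longlongrightarrow> 0) at_bot" "(H \<longlongrightarrow> 1) at_top"
proof -
  have "eventually (\<lambda>x. H x = 0) at_bot" using assms unfolding cdf01_def eventually_at_bot_linorder
    by (intro exI[of _ "-1"]) auto
  then show "(H \<longlongrightarrow> 0) at_bot" by (rule tendsto_eventually)
  have "eventually (\<lambda>x. H x = 1) at_top" using assms unfolding cdf01_def eventually_at_top_linorder
    by (intro exI[of _ "1"]) auto
  then show "(H \<longlongrightarrow> 1) at_top" by (rule tendsto_eventually)
qed

lemma cdf01_real_distribution:
  assumes "cdf01 H"
  shows "real_distribution (interval_measure H)"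
  apply (rule real_distribution_interval_measure)
  using assms cdf01_tendsto[OF assms] unfolding cdf01_def mono_def by auto

lemma interval_measure_cdf01_Iic:
  assumes "cdf01 H"
  shows "measure (interval_measure H) {..x} = H x" "emeasure (interval_measure H) {..x} = H x"
  using measure_interval_measure_Iic[of H x] emeasure_interval_measure_Iic[of H x]
    assms cdf01_tendsto[OF assms] unfolding cdf01_def mono_def by auto

lemma measure_interval_measure_cdf01_Ioi:
  assumes H: "cdf01 H"
  shows "measure (interval_measure H) {x<..} = 1 - H x"
proof -
  interpret real_distribution "interval_measure H" using cdf01_real_distribution[OF H] .
  have "{x<..} = space (interval_measure H) - {..x}" by auto
  then show ?thesis using prob_compl[of "{..x}"] interval_measure_cdf01_Iic(1)[OF H, of x] by simp
qed

lemma cdf01_AE_unit_interval: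
  assumes H: "cdf01 H"
  shows "AE y in interval_measure H. 0 \<le> y \<and> y \<le> 1"
proof -
  let ?M = "interval_measure H"
  interpret real_distribution ?M using cdf01_real_distribution[OF H] .
  have null1: "{1<..} \<in> null_sets ?M"
    using measure_interval_measure_cdf01_Ioi[OF H, of 1] H unfolding cdf01_def
    by (simp add: emeasure_eq_measure null_sets_def)
  have "{..- 1 / real (Suc i)} \<in> null_sets ?M" for i
  proof -
    have "H (- 1 / real (Suc i)) = 0" using H unfolding cdf01_def by auto
    then show ?thesis
      using interval_measure_cdf01_Iic(2)[OF H, of "- 1 / real (Suc i)"] by (simp add: null_sets_def)
  qed
  then have null: "(\<Union>i::nat. {..- 1 / real (Suc i)}) \<in> null_sets ?M" by auto
  have "{..<0::real} \<subseteq> (\<Union>i::nat. {..- 1 / real (Suc i)})"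
  proof
    fix x :: real assume "x \<in> {..<0}"
    then obtain i :: nat where "1 / real (Suc i) < - x"
      using reals_Archimedean[of "-x"] by (auto simp: inverse_eq_divide)
    then have "x \<le> - 1 / real (Suc i)" by simp
    then show "x \<in> (\<Union>i. {..- 1 / real (Suc i)})" by blast
  qed
  from null_sets_subset[OF null _ this] have null0: "{..<0::real} \<in> null_sets ?M" by simp
  show ?thesis
    by (rule AE_I'[of "{..<0} \<union> {1<..}"]) (use null0 null1 in auto)
qed

lemma cdf_mean_dirac_cdf:
  assumes "0 \<le> a" "a \<le> 1"
  shows "cdf_mean (dirac_cdf a) = a"
proof -
  have rd1: "real_distribution (interval_measure (dirac_cdf a))"
    using cdf01_real_distribution[OF cdf01_dirac_cdf[OF assms]] .
  have rd2: "real_distribution (return borel a)"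
    unfolding real_distribution_def real_distribution_axioms_def
    by (auto simp: prob_space_return)
  have "cdf (interval_measure (dirac_cdf a)) = dirac_cdf a"
    using interval_measure_cdf01_Iic(1)[OF cdf01_dirac_cdf[OF assms]] by (auto simp: cdf_def)
  moreover have "cdf (return borel a) = dirac_cdf a"
    by (auto simp: cdf_def dirac_cdf_def fun_eq_iff measure_return indicator_def)
  ultimately have "interval_measure (dirac_cdf a) = return borel a"
    using cdf_unique[OF rd1 rd2] by simp
  then show ?thesis unfolding cdf_mean_def by (simp add: integral_return)
qed

lemma sum_Suc_less_count:
  "(\<Sum>k<n. if Suc k < m then 1 else 0 :: real) = real (min n (m - 1))"
  by (induction n) (auto simp: min_def)

definition cdf_riemann_sum :: "nat \<Rightarrow> (real \<Rightarrow> real) \<Rightarrow> real" where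
  "cdf_riemann_sum n H = (\<Sum>k<n. H (real (Suc k) / real n)) / real n"

lemma staircase_bounds:
  assumes n: "n > 0" and y: "0 \<le> y" "y \<le> 1"
  shows "(\<Sum>k<n. indicator {real (Suc k) / real n<..} y) / real n \<le> y"
    "y \<le> (\<Sum>k<n. indicator {real (Suc k) / real n<..} y) / real n + 1 / real n"
proof -
  define m where "m = nat \<lceil>real n * y\<rceil>"
  have m: "real m = \<lceil>real n * y\<rceil>" unfolding m_def using y by simp
  have mn: "m \<le> n" unfolding m_def using y n
    by (metis ceiling_le_iff mult_left_le nat_le_iff of_int_of_nat_eq of_nat_0_le_iff)
  have eq: "indicator {real (Suc k) / real n<..} y = (if Suc k < m then 1 else (0::real))" for k
  proof -
    have "real (Suc k) / real n < y \<longleftrightarrow> real (Suc k) < real n * y" using n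
      by (simp add: divide_less_eq mult.commute)
    also have "\<dots> \<longleftrightarrow> int (Suc k) < \<lceil>real n * y\<rceil>" by (simp add: less_ceiling_iff)
    also have "\<dots> \<longleftrightarrow> Suc k < m" unfolding m_def by linarith
    finally show ?thesis by (simp add: indicator_def)
  qed
  have S: "(\<Sum>k<n. indicator {real (Suc k) / real n<..} y) = real (m - 1)"
    unfolding eq sum_Suc_less_count using mn by simp
  have c1: "real n * y \<le> real m" using m by linarith
  have c2: "real m < real n * y + 1" using m by linarith
  show "(\<Sum>k<n. indicator {real (Suc k) / real n<..} y) / real n \<le> y"
  proof (cases "m = 0")
    case True then show ?thesis unfolding S using y by simp
  next
    case False
    then have "real (m - 1) \<le> real n * y" using c2 by (simp add: of_nat_diff)
    then show ?thesis unfolding S using n by (simp add: divide_le_eq mult.commute)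
  qed
  show "y \<le> (\<Sum>k<n. indicator {real (Suc k) / real n<..} y) / real n + 1 / real n"
  proof -
    have "real m \<le> real (m - 1) + 1" by linarith
    then have "real n * y \<le> real (m - 1) + 1" using c1 by linarith
    then have "y \<le> (real (m - 1) + 1) / real n" using n by (simp add: le_divide_eq mult.commute)
    then show ?thesis unfolding S by (simp add: add_divide_distrib)
  qed
qed

lemma cdf_mean_riemann_bounds:
  assumes H: "cdf01 H" and n: "n > 0"
  shows "1 - cdf_riemann_sum n H \<le> cdf_mean H" "cdf_mean H \<le> 1 - cdf_riemann_sum n H + 1 / real n"
proof -
  let ?M = "interval_measure H"
  interpret rd: real_distribution ?M using cdf01_real_distribution[OF H] .
  note AE01 = cdf01_AE_unit_interval[OF H]
  have intid: "integrable ?M (\<lambda>y. y)"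
    by (rule rd.integrable_const_bound[where B=1]) (use AE01 in \<open>auto elim!: AE_mp\<close>)
  define phi where "phi y = (\<Sum>k<n. indicator {real (Suc k) / real n<..} y) / real n" for y :: real
  have intind: "integrable ?M (indicator {real (Suc k) / real n<..} :: real \<Rightarrow> real)" for k
    by (rule integrable_real_indicator) (auto simp: rd.emeasure_eq_measure)
  have intphi: "integrable ?M phi" unfolding phi_def using intind by auto
  have intphi1: "integrable ?M (\<lambda>y. phi y + 1 / real n)" using intphi by auto
  have "integral\<^sup>L ?M phi = (\<Sum>k<n. integral\<^sup>L ?M (indicator {real (Suc k) / real n<..})) / real n"
    unfolding phi_def using intind by (simp add: integral_sum)
  also have "\<dots> = (\<Sum>k<n. 1 - H (real (Suc k) / real n)) / real n"
    by (simp add: measure_interval_measure_cdf01_Ioi[OF H])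
  also have "\<dots> = 1 - cdf_riemann_sum n H" unfolding cdf_riemann_sum_def using n
    by (simp add: sum_subtractf diff_divide_distrib)
  finally have iphi: "integral\<^sup>L ?M phi = 1 - cdf_riemann_sum n H" .
  have "integral\<^sup>L ?M phi \<le> integral\<^sup>L ?M (\<lambda>y. y)"
    by (rule integral_mono_AE[OF intphi intid])
      (use AE01 in \<open>eventually_elim, use staircase_bounds(1)[OF n] in \<open>auto simp: phi_def\<close>\<close>)
  then show "1 - cdf_riemann_sum n H \<le> cdf_mean H" unfolding cdf_mean_def iphi .
  have "integral\<^sup>L ?M (\<lambda>y. y) \<le> integral\<^sup>L ?M (\<lambda>y. phi y + 1 / real n)"
    by (rule integral_mono_AE[OF intid intphi1])
      (use AE01 in \<open>eventually_elim, use staircase_bounds(2)[OF n] in \<open>auto simp: phi_def\<close>\<close>)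
  also have "\<dots> = integral\<^sup>L ?M phi + 1 / real n" using intphi rd.prob_space by simp
  finally show "cdf_mean H \<le> 1 - cdf_riemann_sum n H + 1 / real n" unfolding cdf_mean_def iphi .
qed

text \<open>As \<open>xG \<Gamma> \<theta> = 1 - \<integral>\<^sub>0\<^sup>1 \<Gamma> \<theta> s ds\<close>, integrals against the expected assignment are
  approximated by averages over the slices \<open>\<Gamma> \<cdot> (k/n)\<close>, to which (F1) applies one at a time.\<close>
lemma integral_times_mean_approx:
  fixes a :: "real \<Rightarrow> real" and \<Gamma> :: "real \<Rightarrow> real \<Rightarrow> real"
  assumes cdf: "\<forall>\<theta>\<in>{0..1}. cdf01 (\<Gamma> \<theta>)"
    and ia: "a integrable_on {0..1}" and iabs: "(\<lambda>\<theta>. \<bar>a \<theta>\<bar>) integrable_on {0..1}"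
    and iG: "\<And>s. (\<lambda>\<theta>. a \<theta> * \<Gamma> \<theta> s) integrable_on {0..1}"
    and im: "(\<lambda>\<theta>. a \<theta> * xG \<Gamma> \<theta>) integrable_on {0..1}"
    and n: "n > 0"
  shows "\<bar>integral {0..1} (\<lambda>\<theta>. a \<theta> * xG \<Gamma> \<theta>)
      - (integral {0..1} a - (\<Sum>k<n. integral {0..1} (\<lambda>\<theta>. a \<theta> * \<Gamma> \<theta> (real (Suc k) / real n))) / real n)\<bar>
     \<le> integral {0..1} (\<lambda>\<theta>. \<bar>a \<theta>\<bar>) / real n"
proof -
  define A where "A \<theta> = a \<theta> - (\<Sum>k<n. a \<theta> * \<Gamma> \<theta> (real (Suc k) / real n)) / real n" for \<theta>
  have isum: "(\<lambda>\<theta>. \<Sum>k<n. a \<theta> * \<Gamma> \<theta> (real (Suc k) / real n)) integrable_on {0..1}"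
    by (rule integrable_sum) (auto intro: iG)
  have iA: "A integrable_on {0..1}" unfolding A_def
    by (intro integrable_diff ia) (use isum in \<open>simp add: divide_inverse integrable_on_mult_left\<close>)
  have intA: "integral {0..1} A = integral {0..1} a
      - (\<Sum>k<n. integral {0..1} (\<lambda>\<theta>. a \<theta> * \<Gamma> \<theta> (real (Suc k) / real n))) / real n"
  proof -
    have "integral {0..1} A = integral {0..1} a
        - integral {0..1} (\<lambda>\<theta>. (\<Sum>k<n. a \<theta> * \<Gamma> \<theta> (real (Suc k) / real n)) / real n)"
      unfolding A_def by (rule integral_diff[OF ia])
        (use isum in \<open>simp add: divide_inverse integrable_on_mult_left\<close>)
    also have "integral {0..1} (\<lambda>\<theta>. (\<Sum>k<n. a \<theta> * \<Gamma> \<theta> (real (Suc k) / real n)) / real n)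
       = (\<Sum>k<n. integral {0..1} (\<lambda>\<theta>. a \<theta> * \<Gamma> \<theta> (real (Suc k) / real n))) / real n"
      by (simp add: integral_sum iG)
    finally show ?thesis .
  qed
  have pw: "\<bar>a \<theta> * xG \<Gamma> \<theta> - A \<theta>\<bar> \<le> \<bar>a \<theta>\<bar> / real n" if th: "\<theta> \<in> {0..1}" for \<theta>
  proof -
    have c: "cdf01 (\<Gamma> \<theta>)" using cdf th by blast
    have "A \<theta> = a \<theta> * (1 - cdf_riemann_sum n (\<Gamma> \<theta>))"
      unfolding A_def cdf_riemann_sum_def by (simp add: sum_distrib_left algebra_simps)
    then have "a \<theta> * xG \<Gamma> \<theta> - A \<theta> = a \<theta> * (xG \<Gamma> \<theta> - (1 - cdf_riemann_sum n (\<Gamma> \<theta>)))" by (simp add: algebra_simps)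
    moreover have b: "\<bar>xG \<Gamma> \<theta> - (1 - cdf_riemann_sum n (\<Gamma> \<theta>))\<bar> \<le> 1 / real n"
      using cdf_mean_riemann_bounds[OF c n] unfolding xG_def by linarith
    moreover have "\<bar>a \<theta>\<bar> * \<bar>xG \<Gamma> \<theta> - (1 - cdf_riemann_sum n (\<Gamma> \<theta>))\<bar> \<le> \<bar>a \<theta>\<bar> * (1 / real n)"
      by (rule mult_left_mono[OF b]) simp
    ultimately have "\<bar>a \<theta> * xG \<Gamma> \<theta> - A \<theta>\<bar> \<le> \<bar>a \<theta>\<bar> * (1 / real n)"
      by (simp add: abs_mult)
    then show ?thesis by simp
  qed
  have "\<bar>integral {0..1} (\<lambda>\<theta>. a \<theta> * xG \<Gamma> \<theta> - A \<theta>)\<bar> \<le> integral {0..1} (\<lambda>\<theta>. \<bar>a \<theta>\<bar> / real n)"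
    using integral_norm_bound_integral[of "\<lambda>\<theta>. a \<theta> * xG \<Gamma> \<theta> - A \<theta>" "{0..1}" "\<lambda>\<theta>. \<bar>a \<theta>\<bar> / real n"]
      integrable_diff[OF im iA] iabs pw by (simp add: divide_inverse integrable_on_mult_left)
  moreover have "integral {0..1} (\<lambda>\<theta>. a \<theta> * xG \<Gamma> \<theta> - A \<theta>)
      = integral {0..1} (\<lambda>\<theta>. a \<theta> * xG \<Gamma> \<theta>) - integral {0..1} A"
    by (rule integral_diff[OF im iA])
  ultimately show ?thesis using intA by simp
qed

section \<open>Incentive compatibility and the envelope formula\<close>

definition envelope_transfer :: "(real \<Rightarrow> real) \<Rightarrow> real \<Rightarrow> real" where
  "envelope_transfer x \<theta> = \<theta> * x \<theta> - integral {0..\<theta>} x"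

definition virtual_value :: "(real \<Rightarrow> real) \<Rightarrow> (real \<Rightarrow> real) \<Rightarrow> real \<Rightarrow> real" where
  "virtual_value F f \<theta> = \<theta> - (1 - F \<theta>) / f \<theta>"

definition virtual_surplus :: "(real \<Rightarrow> real) \<Rightarrow> (real \<Rightarrow> real) \<Rightarrow> real \<Rightarrow> real" where
  "virtual_surplus F f \<theta> = \<theta> * f \<theta> - (1 - F \<theta>)"

lemma virtual_surplus_continuous: "type_dist F f \<Longrightarrow> continuous_on {0..1} (virtual_surplus F f)"
  unfolding virtual_surplus_def using type_distD(4) type_dist_continuous by (intro continuous_intros) auto

lemma virtual_surplus_eq:
  assumes "type_dist F f" "myerson_regular F f" "\<theta> \<in> {0<..<1}"
  shows "virtual_surplus F f \<theta> = f \<theta> * virtual_value F f \<theta>"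
  using regular_density_pos[OF assms] unfolding virtual_surplus_def virtual_value_def by (simp add: field_simps)

lemma virtual_value_mono:
  assumes "myerson_regular F f" "a \<in> {0<..<1}" "b \<in> {0<..<1}" "a \<le> b"
  shows "virtual_value F f a \<le> virtual_value F f b"
  using assms unfolding myerson_regular_def mono_on_def virtual_value_def by blast

lemma IC_imp_mono_on:
  fixes x t :: "real \<Rightarrow> real"
  assumes IC: "\<forall>\<theta>\<in>{0..1}. \<forall>\<theta>'\<in>{0..1}. \<theta> * x \<theta> - t \<theta> \<ge> \<theta> * x \<theta>' - t \<theta>'"
  shows "mono_on {0..1} x"
proof (rule mono_onI)
  fix a b :: real assume ab: "a \<in> {0..1}" "b \<in> {0..1}" "a \<le> b"
  have "b * x b - t b \<ge> b * x a - t a" "a * x a - t a \<ge> a * x b - t b" using IC ab by auto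
  then have "(b - a) * (x b - x a) \<ge> 0" by (simp add: algebra_simps)
  then show "x a \<le> x b" using ab by (cases "a = b") (auto simp: zero_le_mult_iff)
qed

lemma IC_envelope_inequality:
  fixes x t :: "real \<Rightarrow> real"
  assumes IC: "\<forall>\<theta>\<in>{0..1}. \<forall>\<theta>'\<in>{0..1}. \<theta> * x \<theta> - t \<theta> \<ge> \<theta> * x \<theta>' - t \<theta>'"
    and th: "\<theta> \<in> {0..1}"
  shows "integral {0..\<theta>} x \<le> (\<theta> * x \<theta> - t \<theta>) + t 0"
proof (rule le_of_le_plus_div_nat)
  define U where "U s = s * x s - t s" for s
  fix n :: nat assume n: "n > 0"
  define h where "h = \<theta> / real n"
  define p where "p k = real k * h" for k :: nat
  have h: "0 \<le> h" unfolding h_def using th by simp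
  have pin: "p k \<in> {0..1}" if "k \<le> n" for k
  proof -
    have "real k * h \<le> real n * h" using that h by (simp add: mult_right_mono)
    also have "\<dots> = \<theta>" unfolding h_def using n by simp
    finally show ?thesis unfolding p_def using th h by auto
  qed
  have dirac_cdf: "U (p (Suc k)) - U (p k) \<ge> h * x (p k)" if "k < n" for k
  proof -
    have "U (p (Suc k)) \<ge> p (Suc k) * x (p k) - t (p k)"
      using IC pin[of "Suc k"] pin[of k] that unfolding U_def by auto
    moreover have "p (Suc k) = p k + h" unfolding p_def by (simp add: algebra_simps)
    ultimately show ?thesis unfolding U_def by (simp add: algebra_simps)
  qed
  have "(\<Sum>k<n. U (p (Suc k)) - U (p k)) = U (p n) - U (p 0)"
    by (rule sum_lessThan_telescope)
  moreover have "p n = \<theta>" "p 0 = 0" unfolding p_def h_def using n by auto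
  ultimately have tel: "U \<theta> - U 0 \<ge> (\<Sum>k<n. h * x (p k))"
    using sum_mono[of "{..<n}" "\<lambda>k. h * x (p k)" "\<lambda>k. U (p (Suc k)) - U (p k)"] dirac_cdf by auto
  have mx': "mono_on {0..\<theta>} x" by (rule mono_on_subset[OF IC_imp_mono_on[OF IC]]) (use th in auto)
  have "integral {0..\<theta>} x \<le> (\<theta> - 0) / real n * (\<Sum>k<n. x (0 + real (Suc k) * (\<theta> - 0) / real n))"
    by (rule integral_mono_on_le_riemann_sum[OF mx' _ n]) (use th in auto)
  also have "\<dots> = (\<Sum>k<n. h * x (p (Suc k)))"
    unfolding h_def p_def by (simp add: sum_distrib_left)
  also have "(\<Sum>k<n. h * x (p (Suc k))) = (\<Sum>k<n. h * x (p k)) + h * (x \<theta> - x 0)"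
  proof -
    have "(\<Sum>k<n. h * x (p (Suc k)) - h * x (p k)) = h * x (p n) - h * x (p 0)"
      by (rule sum_lessThan_telescope)
    then show ?thesis using \<open>p n = \<theta>\<close> \<open>p 0 = 0\<close> by (simp add: sum_subtractf algebra_simps)
  qed
  finally have "integral {0..\<theta>} x \<le> (U \<theta> - U 0) + h * (x \<theta> - x 0)" using tel by linarith
  then show "integral {0..\<theta>} x \<le> (\<theta> * x \<theta> - t \<theta>) + t 0 + \<theta> * (x \<theta> - x 0) / real n"
    unfolding U_def h_def by simp
qed

lemma transfer_le_envelope_transfer:
  fixes x t :: "real \<Rightarrow> real"
  assumes IC: "\<forall>\<theta>\<in>{0..1}. \<forall>\<theta>'\<in>{0..1}. \<theta> * x \<theta> - t \<theta> \<ge> \<theta> * x \<theta>' - t \<theta>'"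
    and IR: "\<forall>\<theta>\<in>{0..1}. \<theta> * x \<theta> - t \<theta> \<ge> 0" and th: "\<theta> \<in> {0..1}"
  shows "t \<theta> \<le> envelope_transfer x \<theta>"
  using IC_envelope_inequality[OF IC th] IR
  unfolding envelope_transfer_def by force

lemma envelope_transfer_IC:
  fixes x :: "real \<Rightarrow> real"
  assumes mx: "mono_on {0..1} x" and th: "\<theta> \<in> {0..1}" "\<theta>' \<in> {0..1}"
  shows "\<theta> * x \<theta>' - envelope_transfer x \<theta>' \<le> \<theta> * x \<theta> - envelope_transfer x \<theta>"
proof -
  have split: "integral {0..b} x = integral {0..a} x + integral {a..b} x" if "0 \<le> a" "a \<le> b" "b \<le> 1" for a b
    using Henstock_Kurzweil_Integration.integral_combine[OF that(1,2)
        integrable_on_mono_on[OF mono_on_subset[OF mx]]] that by auto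
  have bounds: "(b - a) * x a \<le> integral {a..b} x" "integral {a..b} x \<le> (b - a) * x b"
    if "0 \<le> a" "a \<le> b" "b \<le> 1" for a b
    using integral_mono_on_bounds[OF mono_on_subset[OF mx], of a b] that by auto
  have "(\<theta> - \<theta>') * x \<theta>' \<le> integral {0..\<theta>} x - integral {0..\<theta>'} x"
  proof (cases "\<theta>' \<le> \<theta>")
    case True
    then show ?thesis using split[of \<theta>' \<theta>] bounds(1)[of \<theta>' \<theta>] th by auto
  next
    case False
    then show ?thesis using split[of \<theta> \<theta>'] bounds(2)[of \<theta> \<theta>'] th by (auto simp: algebra_simps)
  qed
  then show ?thesis unfolding envelope_transfer_def by (simp add: algebra_simps)
qed

lemma envelope_utility_nonneg:
  fixes x :: "real \<Rightarrow> real"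
  assumes mx: "mono_on {0..1} x" and x0: "\<And>\<theta>. \<theta> \<in> {0..1} \<Longrightarrow> 0 \<le> x \<theta>" and th: "\<theta> \<in> {0..1}"
  shows "0 \<le> \<theta> * x \<theta> - envelope_transfer x \<theta>"
  using integral_nonneg[OF integrable_on_mono_on[OF mono_on_subset[OF mx]], of 0 \<theta>] x0 th
  unfolding envelope_transfer_def by auto

lemma envelope_transfer_nonneg:
  fixes x :: "real \<Rightarrow> real"
  assumes mx: "mono_on {0..1} x" and th: "\<theta> \<in> {0..1}"
  shows "0 \<le> envelope_transfer x \<theta>"
  using integral_mono_on_bounds(2)[OF mono_on_subset[OF mx], of 0 \<theta>] th
  unfolding envelope_transfer_def by auto

lemma EF_envelope_transfer:
  assumes td: "type_dist F f" and mx: "mono_on {0..1} x"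
  shows "EF_ok f (envelope_transfer x)"
    "EF f (envelope_transfer x) = integral {0..1} (\<lambda>\<theta>. virtual_surplus F f \<theta> * x \<theta>)"
proof -
  have Xc: "continuous_on {0..1} (\<lambda>\<theta>. integral {0..\<theta>} x)"
    by (rule indefinite_integral_continuous_1[OF integrable_on_mono_on[OF mx]])
  have i1: "(\<lambda>\<theta>. (f \<theta> * \<theta>) * x \<theta>) integrable_on {0..1}"
    by (rule continuous_times_mono_integrable[OF mx]) (use type_distD(4)[OF td] in \<open>intro continuous_intros\<close>)
  have i2: "(\<lambda>\<theta>. f \<theta> * integral {0..\<theta>} x) integrable_on {0..1}"
    by (rule integrable_continuous_interval) (use type_distD(4)[OF td] Xc in \<open>intro continuous_intros\<close>)
  have i3: "(\<lambda>\<theta>. (1 - F \<theta>) * x \<theta>) integrable_on {0..1}"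
    by (rule continuous_times_mono_integrable[OF mx])
      (use type_dist_continuous[OF td] in \<open>intro continuous_intros\<close>)
  have eq: "(\<lambda>\<theta>. f \<theta> * envelope_transfer x \<theta>) = (\<lambda>\<theta>. (f \<theta> * \<theta>) * x \<theta> - f \<theta> * integral {0..\<theta>} x)"
    unfolding envelope_transfer_def by (simp add: fun_eq_iff algebra_simps)
  show "EF_ok f (envelope_transfer x)" unfolding EF_ok_def eq using i1 i2 by (rule integrable_diff)
  have "EF f (envelope_transfer x)
      = integral {0..1} (\<lambda>\<theta>. (f \<theta> * \<theta>) * x \<theta>) - integral {0..1} (\<lambda>\<theta>. (1 - F \<theta>) * x \<theta>)"
    unfolding EF_def eq integral_diff[OF i1 i2] integral_density_times_cumulative[OF td mx] ..
  also have "\<dots> = integral {0..1} (\<lambda>\<theta>. virtual_surplus F f \<theta> * x \<theta>)"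
    unfolding integral_diff[OF i1 i3, symmetric] virtual_surplus_def by (simp add: algebra_simps)
  finally show "EF f (envelope_transfer x) = integral {0..1} (\<lambda>\<theta>. virtual_surplus F f \<theta> * x \<theta>)" .
qed

lemma effort_le_virtual_surplus:
  assumes td: "type_dist F f" and fe: "feasible f G m \<Gamma> t"
  shows "EF f t \<le> integral {0..1} (\<lambda>\<theta>. virtual_surplus F f \<theta> * xG \<Gamma> \<theta>)"
proof -
  have IC: "\<forall>\<theta>\<in>{0..1}. \<forall>\<theta>'\<in>{0..1}. \<theta> * xG \<Gamma> \<theta> - t \<theta> \<ge> \<theta> * xG \<Gamma> \<theta>' - t \<theta>'"
    and IR: "\<forall>\<theta>\<in>{0..1}. \<theta> * xG \<Gamma> \<theta> - t \<theta> \<ge> 0" and it: "EF_ok f t"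
    using fe unfolding feasible_def by auto
  note mx = IC_imp_mono_on[OF IC]
  have "EF f t \<le> EF f (envelope_transfer (xG \<Gamma>))"
    unfolding EF_def
    by (rule integral_le[OF it[unfolded EF_ok_def] EF_envelope_transfer(1)[OF td mx, unfolded EF_ok_def]])
       (use transfer_le_envelope_transfer[OF IC IR] type_distD(5)[OF td] in \<open>auto intro: mult_left_mono\<close>)
  then show ?thesis unfolding EF_envelope_transfer(2)[OF td mx] .
qed

section \<open>The candidate mechanism\<close>

definition star_mechanism :: "(real \<Rightarrow> real) \<Rightarrow> (real \<Rightarrow> real) \<Rightarrow> real \<Rightarrow> real \<Rightarrow> real \<Rightarrow> real" where
  "star_mechanism F G ts \<theta> = dirac_cdf (xstar F G ts \<theta>)"

lemma xstar_range:
  assumes td: "type_dist F f" and pG: "prize_dist G" and th: "\<theta> \<in> {0..1}"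
  shows "0 \<le> xstar F G ts \<theta>" "xstar F G ts \<theta> \<le> 1"
  using qinv_range[OF pG, of "F \<theta>"] type_dist_range[OF td, of \<theta>] th unfolding xstar_def by auto

lemma xstar_mono:
  assumes td: "type_dist F f" and pG: "prize_dist G"
  shows "mono_on {0..1} (xstar F G ts)"
proof (rule mono_onI)
  fix a b :: real assume ab: "a \<in> {0..1}" "b \<in> {0..1}" "a \<le> b"
  show "xstar F G ts a \<le> xstar F G ts b"
  proof (cases "a < ts")
    case True
    then show ?thesis using xstar_range(1)[OF td pG, of b ts] ab by (simp add: xstar_def)
  next
    case False
    then have "\<not> b < ts" using ab by auto
    moreover have "F a \<le> F b" "F b \<le> 1"
      using type_dist_mono[OF td, of a b] type_dist_range[OF td, of b] ab by auto
    ultimately show ?thesis using False qinv_mono[OF pG] by (simp add: xstar_def)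
  qed
qed

lemma star_mechanism_eq:
  assumes td: "type_dist F f" and pG: "prize_dist G" and th: "\<theta> \<in> {0..1}" and s: "s \<in> {0..1}"
  shows "star_mechanism F G ts \<theta> s = (if \<theta> < ts \<or> F \<theta> \<le> G s then 1 else 0)"
proof (cases "\<theta> < ts")
  case True then show ?thesis using s by (simp add: star_mechanism_def dirac_cdf_def xstar_def)
next
  case False
  have "F \<theta> \<le> 1" using type_dist_range[OF td] th by auto
  then show ?thesis using False qinv_le_iff[OF pG _ s, of "F \<theta>"]
    by (simp add: star_mechanism_def dirac_cdf_def xstar_def)
qed

lemma star_mechanism_cdf:
  assumes td: "type_dist F f" and pG: "prize_dist G" and th: "\<theta> \<in> {0..1}"
  shows "cdf01 (star_mechanism F G ts \<theta>)" "xG (star_mechanism F G ts) \<theta> = xstar F G ts \<theta>"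
  unfolding star_mechanism_def xG_def using cdf01_dirac_cdf cdf_mean_dirac_cdf xstar_range[OF td pG th] by auto

lemma star_mechanism_antimono:
  assumes td: "type_dist F f" and pG: "prize_dist G" and uv: "u \<in> {0..1}" "v \<in> {0..1}" "u \<le> v"
  shows "star_mechanism F G ts v s \<le> star_mechanism F G ts u s"
proof -
  have "xstar F G ts u \<le> xstar F G ts v" using xstar_mono[OF td pG] uv unfolding mono_on_def by blast
  then show ?thesis unfolding star_mechanism_def dirac_cdf_def by auto
qed

lemma continuous_times_star_mechanism_integrable:
  assumes td: "type_dist F f" and pG: "prize_dist G" and c: "continuous_on {0..1} c"
  shows "(\<lambda>\<theta>. c \<theta> * star_mechanism F G ts \<theta> s) integrable_on {0..1}"
  by (rule continuous_times_bounded_integrable[OF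
        antimono_on_measurable_lebesgue_on[OF star_mechanism_antimono[OF td pG]] _ c, where B=1])
     (auto simp: star_mechanism_def dirac_cdf_def)

lemma density_times_star_mechanism_has_integral:
  assumes td: "type_dist F f" and pG: "prize_dist G" and ts: "ts \<in> {0..1}" and s: "s \<in> {0..1}"
  shows "((\<lambda>\<theta>. f \<theta> * star_mechanism F G ts \<theta> s) has_integral max (F ts) (G s)) {0..1}"
proof -
  obtain c where c: "c \<in> {0..1}" "F c = G s"
    using type_dist_surj[OF td, of "G s"] prize_distD(4,5)[OF pG] by metis
  define b where "b = max ts c"
  have b: "b \<in> {0..1}" using ts c by (auto simp: b_def)
  have Fb: "F b = max (F ts) (G s)"
    unfolding b_def using type_dist_mono[OF td, of ts c] type_dist_mono[OF td, of c ts] ts c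
      by (auto simp: max_def)
  have R: "((\<lambda>\<theta>. if \<theta> \<in> {0..b} then f \<theta> else 0) has_integral F b) {0..1}"
  proof -
    have "(f has_integral F b) ({0..b} \<inter> {0..1})" using type_distD(6)[OF td b] b by (simp add: Int_absorb2)
    then show ?thesis by (subst has_integral_restrict_Int) 
  qed
  have "((\<lambda>\<theta>. f \<theta> * star_mechanism F G ts \<theta> s) has_integral F b) {0..1}"
  proof (rule has_integral_spike_finite[of "{b}" _ _ "\<lambda>\<theta>. if \<theta> \<in> {0..b} then f \<theta> else 0"])
    show "finite {b}" by simp
    show "((\<lambda>\<theta>. if \<theta> \<in> {0..b} then f \<theta> else 0) has_integral F b) {0..1}" by (rule R)
  next
    fix \<theta> assume th: "\<theta> \<in> {0..1} - {b}"
    then have th1: "\<theta> \<in> {0..1}" by auto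
    have "(\<theta> < ts \<or> F \<theta> \<le> G s) \<longleftrightarrow> (\<theta> < ts \<or> \<theta> \<le> c)"
      using type_dist_less_iff(2)[OF td th1 c(1)] c by simp
    also have "\<dots> \<longleftrightarrow> \<theta> \<in> {0..b}" using th b_def by auto
    finally show "f \<theta> * star_mechanism F G ts \<theta> s = (if \<theta> \<in> {0..b} then f \<theta> else 0)"
      using star_mechanism_eq[OF td pG th1 s, of ts] by simp
  qed
  then show ?thesis using Fb by simp
qed

lemma star_mechanism_F1:
  assumes td: "type_dist F f" and pG: "prize_dist G" and ts: "ts \<in> {0..1}"
  shows "EF_ok f (\<lambda>\<theta>. star_mechanism F G ts \<theta> y) \<and> G y \<le> EF f (\<lambda>\<theta>. star_mechanism F G ts \<theta> y)"
proof -
  consider "y < 0" | "y \<in> {0..1}" | "1 < y" by fastforce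
  then show ?thesis
  proof cases
    case 1
    have "f \<theta> * star_mechanism F G ts \<theta> y = 0" if "\<theta> \<in> {0..1}" for \<theta>
      using xstar_range(1)[OF td pG that, of ts] 1 by (simp add: star_mechanism_def dirac_cdf_def)
    then have "((\<lambda>\<theta>. f \<theta> * star_mechanism F G ts \<theta> y) has_integral 0) {0..1}"
      by (intro has_integral_is_0) auto
    moreover have "G y = 0" using prize_distD(1)[OF pG] 1 unfolding cdf01_def by auto
    ultimately show ?thesis unfolding EF_ok_def EF_def by (auto simp: integral_unique)
  next
    case 2
    then show ?thesis using density_times_star_mechanism_has_integral[OF td pG ts, of y]
      unfolding EF_ok_def EF_def by (auto simp: integral_unique)
  next
    case 3
    have "f \<theta> = f \<theta> * star_mechanism F G ts \<theta> y" if "\<theta> \<in> {0..1}" for \<theta>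
      using xstar_range(2)[OF td pG that, of ts] 3 by (simp add: star_mechanism_def dirac_cdf_def)
    then have "((\<lambda>\<theta>. f \<theta> * star_mechanism F G ts \<theta> y) has_integral 1) {0..1}"
      using type_distD(6)[OF td, of 1] type_distD(2)[OF td]
        has_integral_eq[of "{0..1}" f "\<lambda>\<theta>. f \<theta> * star_mechanism F G ts \<theta> y"] by auto
    moreover have "G y = 1" using prize_distD(1)[OF pG] 3 unfolding cdf01_def by auto
    ultimately show ?thesis unfolding EF_ok_def EF_def by (auto simp: integral_unique)
  qed
qed

lemma feasible_star_mechanism:
  assumes td: "type_dist F f" and pG: "prize_dist G" and ts: "ts \<in> {0..1}"
    and m: "m \<le> EF f (xstar F G ts)"
  shows "feasible f G m (star_mechanism F G ts) (envelope_transfer (xstar F G ts))"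
proof -
  let ?x = "xstar F G ts"
  note mx = xstar_mono[OF td pG]
  have xG: "\<And>\<theta>. \<theta> \<in> {0..1} \<Longrightarrow> xG (star_mechanism F G ts) \<theta> = ?x \<theta>"
    using star_mechanism_cdf(2)[OF td pG] by blast
  have "EF_ok f ?x" unfolding EF_ok_def by (rule continuous_times_mono_integrable[OF mx type_distD(4)[OF td]])
  moreover have "EF_ok f (xG (star_mechanism F G ts)) = EF_ok f ?x"
    "EF f (xG (star_mechanism F G ts)) = EF f ?x"
    unfolding EF_ok_def EF_def using xG by (auto intro!: integrable_cong integral_cong)
  ultimately show ?thesis
    unfolding feasible_def
  proof (intro conjI ballI allI)
    fix \<theta> \<theta>' :: real assume th: "\<theta> \<in> {0..1}" "\<theta>' \<in> {0..1}"
    show "\<theta> * xG (star_mechanism F G ts) \<theta>' - envelope_transfer ?x \<theta>'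
        \<le> \<theta> * xG (star_mechanism F G ts) \<theta> - envelope_transfer ?x \<theta>"
      using envelope_transfer_IC[OF mx th] xG th by simp
  next
    fix \<theta> :: real assume th: "\<theta> \<in> {0..1}"
    show "cdf01 (star_mechanism F G ts \<theta>)" by (rule star_mechanism_cdf(1)[OF td pG th])
    show "0 \<le> envelope_transfer ?x \<theta>" by (rule envelope_transfer_nonneg[OF mx th])
    show "0 \<le> \<theta> * xG (star_mechanism F G ts) \<theta> - envelope_transfer ?x \<theta>"
      using envelope_utility_nonneg[OF mx xstar_range(1)[OF td pG] th] xG[OF th] by simp
  qed (use star_mechanism_F1[OF td pG ts] m EF_envelope_transfer(1)[OF td mx] in auto)
qed

definition quantile_riemann_sum :: "(real \<Rightarrow> real) \<Rightarrow> real \<Rightarrow> nat \<Rightarrow> real" where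
  "quantile_riemann_sum G q n = 1 - (\<Sum>k<n. max q (G (real (Suc k) / real n))) / real n"

lemma EF_xstar_riemann_approx:
  assumes td: "type_dist F f" and pG: "prize_dist G" and ts: "ts \<in> {0..1}" and n: "n > 0"
  shows "\<bar>EF f (xstar F G ts) - quantile_riemann_sum G (F ts) n\<bar> \<le> 1 / real n"
proof -
  have fc: "continuous_on {0..1} f" using type_distD(4)[OF td] .
  have iabs: "(\<lambda>\<theta>. \<bar>f \<theta>\<bar>) integrable_on {0..1}"
    using fc by (intro integrable_continuous_interval continuous_intros)
  have xGe: "\<And>\<theta>. \<theta> \<in> {0..1} \<Longrightarrow> f \<theta> * xstar F G ts \<theta> = f \<theta> * xG (star_mechanism F G ts) \<theta>"
    using star_mechanism_cdf(2)[OF td pG] by simp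
  have im: "(\<lambda>\<theta>. f \<theta> * xG (star_mechanism F G ts) \<theta>) integrable_on {0..1}"
    by (rule integrable_eq[OF continuous_times_mono_integrable[OF xstar_mono[OF td pG] fc] xGe])
  note approx = integral_times_mean_approx[OF _ integrable_continuous_interval[OF fc] iabs
      continuous_times_star_mechanism_integrable[OF td pG fc] im n]
  have "integral {0..1} (\<lambda>\<theta>. f \<theta> * xG (star_mechanism F G ts) \<theta>) = EF f (xstar F G ts)"
    unfolding EF_def by (rule integral_cong) (rule sym, erule xGe)
  moreover have "integral {0..1} f = 1"
    using type_distD(6)[OF td, of 1] type_distD(2)[OF td] by (simp add: integral_unique)
  moreover have "integral {0..1} (\<lambda>\<theta>. \<bar>f \<theta>\<bar>) = integral {0..1} f"
    by (rule integral_cong) (use type_distD(5)[OF td] in simp)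
  moreover have "(\<Sum>k<n. integral {0..1} (\<lambda>\<theta>. f \<theta> * star_mechanism F G ts \<theta> (real (Suc k) / real n)))
     = (\<Sum>k<n. max (F ts) (G (real (Suc k) / real n)))"
    using density_times_star_mechanism_has_integral[OF td pG ts] n
    by (intro sum.cong) (auto simp: integral_unique)
  ultimately show ?thesis
    using approx star_mechanism_cdf(1)[OF td pG] unfolding quantile_riemann_sum_def by simp
qed

lemma EF_xstar_uniform:
  assumes pG: "prize_dist G" and q: "q \<in> {0..1}"
  shows "EF (\<lambda>_. 1) (xstar (\<lambda>\<theta>. \<theta>) G q) = integral {q..1} (qinv G)"
proof -
  have eqset: "{q..} \<inter> {0..1} = {q..1::real}" using q by auto
  have "((\<lambda>\<theta>. if \<theta> \<in> {q..} then qinv G \<theta> else 0) has_integral integral {q..1} (qinv G)) {0..1}"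
    unfolding has_integral_restrict_Int eqset
    using qinv_integrable[OF pG, of q 1] q by (simp add: integrable_integral)
  moreover have "(\<lambda>\<theta>. 1 * xstar (\<lambda>\<theta>. \<theta>) G q \<theta>) = (\<lambda>\<theta>. if \<theta> \<in> {q..} then qinv G \<theta> else 0)"
    by (auto simp: xstar_def fun_eq_iff)
  ultimately show ?thesis unfolding EF_def by (simp add: integral_unique)
qed

text \<open>Both sides have the same Riemann approximations: the right-hand side is the left-hand side
  for uniformly distributed types.\<close>
lemma EF_xstar_eq_integral_qinv:
  assumes td: "type_dist F f" and pG: "prize_dist G" and ts: "ts \<in> {0..1}"
  shows "EF f (xstar F G ts) = integral {F ts..1} (qinv G)"
proof (rule eq_if_common_approx)
  have "F ts \<in> {0..1}" using type_dist_range[OF td] ts by auto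
  from EF_xstar_riemann_approx[OF type_dist_uniform pG this]
  show "\<And>n. n > 0 \<Longrightarrow> \<bar>integral {F ts..1} (qinv G) - quantile_riemann_sum G (F ts) n\<bar> \<le> 1 / real n"
    unfolding EF_xstar_uniform[OF pG \<open>F ts \<in> {0..1}\<close>] by simp
qed (rule EF_xstar_riemann_approx[OF td pG ts])

lemma cdf_mean_eq_integral_qinv:
  assumes pG: "prize_dist G"
  shows "cdf_mean G = integral {0..1} (qinv G)"
proof (rule eq_if_common_approx[where c="quantile_riemann_sum G 0"])
  fix n :: nat assume n: "n > 0"
  show "\<bar>integral {0..1} (qinv G) - quantile_riemann_sum G 0 n\<bar> \<le> 1 / real n"
    using EF_xstar_riemann_approx[OF type_dist_uniform pG _ n, of 0] EF_xstar_uniform[OF pG, of 0] by simp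
  have "quantile_riemann_sum G 0 n = 1 - cdf_riemann_sum n G"
    unfolding quantile_riemann_sum_def cdf_riemann_sum_def using prize_distD(4)[OF pG] by simp
  then show "\<bar>cdf_mean G - quantile_riemann_sum G 0 n\<bar> \<le> 1 / real n"
    using cdf_mean_riemann_bounds[OF prize_distD(1)[OF pG] n] by simp
qed

definition star_quality :: "(real \<Rightarrow> real) \<Rightarrow> (real \<Rightarrow> real) \<Rightarrow> (real \<Rightarrow> real) \<Rightarrow> real \<Rightarrow> real" where
  "star_quality F f G ts = EF f (xstar F G ts)"

definition star_effort :: "(real \<Rightarrow> real) \<Rightarrow> (real \<Rightarrow> real) \<Rightarrow> (real \<Rightarrow> real) \<Rightarrow> real \<Rightarrow> real" where
  "star_effort F f G ts = integral {0..1} (\<lambda>\<theta>. virtual_surplus F f \<theta> * xstar F G ts \<theta>)"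

lemma star_quality_0:
  assumes "type_dist F f" "prize_dist G"
  shows "star_quality F f G 0 = cdf_mean G"
  using EF_xstar_eq_integral_qinv[OF assms, of 0] cdf_mean_eq_integral_qinv[OF assms(2)]
    type_distD(1)[OF assms(1)]
  unfolding star_quality_def by simp

lemma star_quality_lipschitz:
  assumes td: "type_dist F f" and pG: "prize_dist G" and M: "\<And>\<theta>. \<theta> \<in> {0..1} \<Longrightarrow> \<bar>f \<theta>\<bar> \<le> M"
    and t: "0 \<le> t1" "t1 \<le> t2" "t2 \<le> 1"
  shows "0 \<le> star_quality F f G t2" "star_quality F f G t2 \<le> star_quality F f G t1"
    "star_quality F f G t1 - star_quality F f G t2 \<le> M * (t2 - t1)"
proof -
  have Fm: "0 \<le> F t1" "F t1 \<le> F t2" "F t2 \<le> 1"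
    using type_dist_mono[OF td t] type_dist_range[OF td, of t1] type_dist_range[OF td, of t2] t by auto
  have q01: "\<And>q. q \<in> {F t1..F t2} \<Longrightarrow> 0 \<le> qinv G q \<and> qinv G q \<le> 1"
    using qinv_range[OF pG] Fm by auto
  have "integral {F t1..1} (qinv G) = integral {F t1..F t2} (qinv G) + integral {F t2..1} (qinv G)"
    using Henstock_Kurzweil_Integration.integral_combine[OF Fm(2,3) qinv_integrable[OF pG Fm(1)]] Fm by simp
  moreover have "0 \<le> integral {F t2..1} (qinv G)"
    by (rule integral_nonneg[OF qinv_integrable[OF pG]]) (use Fm qinv_range[OF pG] in auto)
  moreover have "0 \<le> integral {F t1..F t2} (qinv G)"
    by (rule integral_nonneg[OF qinv_integrable[OF pG]]) (use Fm q01 in auto)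
  moreover have "integral {F t1..F t2} (qinv G) \<le> integral {F t1..F t2} (\<lambda>_. 1)"
    by (rule integral_le[OF qinv_integrable[OF pG] integrable_const_ivl]) (use Fm q01 in auto)
  moreover have "star_quality F f G t = integral {F t..1} (qinv G)" if "t \<in> {t1, t2}" for t
    unfolding star_quality_def using EF_xstar_eq_integral_qinv[OF td pG] that t by auto
  ultimately show "0 \<le> star_quality F f G t2" "star_quality F f G t2 \<le> star_quality F f G t1"
    "star_quality F f G t1 - star_quality F f G t2 \<le> M * (t2 - t1)"
    using type_dist_lipschitz[OF td M t] Fm by auto
qed

lemma star_quality_continuous:
  assumes td: "type_dist F f" and pG: "prize_dist G"
  shows "continuous_on {0..1} (star_quality F f G)"
proof -
  obtain M where M: "M > 0" "\<And>\<theta>. \<theta> \<in> {0..1} \<Longrightarrow> \<bar>f \<theta>\<bar> \<le> M"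
    using type_dist_density_bounded[OF td] by blast
  have "dist (star_quality F f G s) (star_quality F f G t) \<le> M * dist s t"
    if "s \<in> {0..1}" "t \<in> {0..1}" for s t
    using star_quality_lipschitz(2,3)[OF td pG M(2), of s t] star_quality_lipschitz(2,3)[OF td pG M(2), of t s]
      that
    by (cases "s \<le> t") (auto simp: dist_real_def)
  then have "M-lipschitz_on {0..1} (star_quality F f G)" using M(1) by (intro lipschitz_onI) auto
  then show ?thesis by (rule lipschitz_on_continuous_on)
qed

lemma star_effort_le_linear:
  assumes td: "type_dist F f" and pG: "prize_dist G"
  obtains C where "\<And>ts. ts \<in> {0..1} \<Longrightarrow> star_effort F f G ts \<le> star_effort F f G 0 + C * ts"
proof -
  obtain C where C: "\<And>\<theta>. \<theta> \<in> {0..1} \<Longrightarrow> \<bar>virtual_surplus F f \<theta>\<bar> \<le> C"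
    using compact_imp_bounded[OF compact_continuous_image[OF virtual_surplus_continuous[OF td] compact_Icc]]
    unfolding bounded_iff by fastforce
  have C0: "0 \<le> C" using C[of 0] by simp
  have "star_effort F f G ts \<le> star_effort F f G 0 + C * ts" if ts: "ts \<in> {0..1}" for ts
  proof -
    let ?d = "\<lambda>\<theta>. virtual_surplus F f \<theta> * xstar F G ts \<theta> - virtual_surplus F f \<theta> * xstar F G 0 \<theta>"
    have i: "(\<lambda>\<theta>. virtual_surplus F f \<theta> * xstar F G t \<theta>) integrable_on {0..1}" for t
      by (rule continuous_times_mono_integrable[OF xstar_mono[OF td pG] virtual_surplus_continuous[OF td]])
    have eqs: "{0..ts} \<inter> {0..1} = {0..ts}" using ts by auto
    have ib: "((\<lambda>\<theta>. if \<theta> \<in> {0..ts} then C else 0) has_integral C * ts) {0..1}"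
      unfolding has_integral_restrict_Int eqs using has_integral_const_real[of C 0 ts] ts
      by (simp add: mult.commute)
    have "norm (?d \<theta>) \<le> (if \<theta> \<in> {0..ts} then C else 0)" if th: "\<theta> \<in> {0..1}" for \<theta>
    proof (cases "\<theta> < ts")
      case True
      have "\<bar>virtual_surplus F f \<theta>\<bar> * \<bar>qinv G (F \<theta>)\<bar> \<le> C * 1"
        using C[OF th] qinv_range[OF pG, of "F \<theta>"] type_dist_range[OF td, of \<theta>] th
        by (intro mult_mono) auto
      then show ?thesis using True th type_distD(1)[OF td] by (auto simp: xstar_def abs_mult)
    next
      case False
      then show ?thesis using th ts C0 by (auto simp: xstar_def)
    qed
    then have "norm (integral {0..1} ?d) \<le> integral {0..1} (\<lambda>\<theta>. if \<theta> \<in> {0..ts} then C else 0)"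
      using ib by (intro integral_norm_bound_integral[OF integrable_diff[OF i i]]) auto
    moreover have "integral {0..1} ?d = star_effort F f G ts - star_effort F f G 0"
      unfolding star_effort_def by (rule integral_diff[OF i i])
    ultimately show ?thesis using ib by (simp add: integral_unique)
  qed
  then show ?thesis by (rule that)
qed

section \<open>Lagrangian relaxation of constraint (F2)\<close>

text \<open>Sign pattern of \<open>v + l\<close> around the cutoff \<open>ts\<close> under which the cutoff assignment maximises
  the Lagrangian with multiplier \<open>l\<close> on (F2) slice by slice.\<close>
definition threshold_multiplier :: "(real \<Rightarrow> real) \<Rightarrow> (real \<Rightarrow> real) \<Rightarrow> real \<Rightarrow> real \<Rightarrow> bool" where
  "threshold_multiplier F f l ts \<longleftrightarrow> 0 \<le> l \<and> ts \<in> {0..1}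
     \<and> (\<forall>\<theta>\<in>{0<..<1}. \<theta> < ts \<longrightarrow> virtual_value F f \<theta> + l \<le> 0)
     \<and> (\<forall>\<theta>\<in>{0<..<1}. ts < \<theta> \<longrightarrow> 0 \<le> virtual_value F f \<theta> + l)"

lemma threshold_multiplier_at:
  assumes mr: "myerson_regular F f" and ts: "ts \<in> {0<..<1}" and v: "virtual_value F f ts \<le> 0"
  shows "threshold_multiplier F f (- virtual_value F f ts) ts"
  unfolding threshold_multiplier_def using v ts virtual_value_mono[OF mr _ ts] virtual_value_mono[OF mr ts]
  by force

lemma threshold_multiplier_shift:
  assumes td: "type_dist F f" and mr: "myerson_regular F f" and H: "threshold_multiplier F f l ts"
    and c: "c \<in> {0..1}" "ts < c"
  obtains \<kappa> where "0 \<le> \<kappa>"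
    "\<And>\<theta>. \<theta> \<in> {0<..<1} \<Longrightarrow> \<theta> < c \<Longrightarrow> virtual_value F f \<theta> + l \<le> \<kappa>"
    "\<And>\<theta>. \<theta> \<in> {0<..<1} \<Longrightarrow> c < \<theta> \<Longrightarrow> \<kappa> \<le> virtual_value F f \<theta> + l"
proof (cases "c < 1")
  case True
  have cin: "c \<in> {0<..<1}" using True c H unfolding threshold_multiplier_def by auto
  show ?thesis
  proof (rule that[of "virtual_value F f c + l"])
    show "0 \<le> virtual_value F f c + l" using H cin c(2) unfolding threshold_multiplier_def by auto
    fix \<theta> :: real assume th: "\<theta> \<in> {0<..<1}"
    show "\<theta> < c \<Longrightarrow> virtual_value F f \<theta> + l \<le> virtual_value F f c + l"
      using virtual_value_mono[OF mr th cin] by simp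
    show "c < \<theta> \<Longrightarrow> virtual_value F f c + l \<le> virtual_value F f \<theta> + l"
      using virtual_value_mono[OF mr cin th] by simp
  qed
next
  case False
  have l: "0 \<le> l" using H unfolding threshold_multiplier_def by auto
  show ?thesis
  proof (rule that[of "1 + l"])
    show "0 \<le> 1 + l" using l by simp
    fix \<theta> :: real assume th: "\<theta> \<in> {0<..<1}"
    have "0 \<le> (1 - F \<theta>) / f \<theta>"
      using type_dist_range[OF td, of \<theta>] regular_density_pos[OF td mr th] th by simp
    then show "\<theta> < c \<Longrightarrow> virtual_value F f \<theta> + l \<le> 1 + l" using th unfolding virtual_value_def by simp
    show "c < \<theta> \<Longrightarrow> 1 + l \<le> virtual_value F f \<theta> + l" using th c False by simp
  qed
qed

lemma star_slice_multiplier: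
  assumes td: "type_dist F f" and mr: "myerson_regular F f" and pG: "prize_dist G"
    and H: "threshold_multiplier F f l ts" and s: "s \<in> {0..1}" and GI: "G s \<le> I"
  obtains \<kappa> b where "0 \<le> \<kappa> * (I - max (F ts) (G s))"
    "\<And>\<theta> y. \<theta> \<in> {0<..<1} - {b} \<Longrightarrow> 0 \<le> y \<Longrightarrow> y \<le> 1 \<Longrightarrow>
      0 \<le> (virtual_value F f \<theta> + l - \<kappa>) * (y - star_mechanism F G ts \<theta> s)"
proof -
  have ts: "ts \<in> {0..1}" using H unfolding threshold_multiplier_def by auto
  obtain cs where cs: "cs \<in> {0..1}" "F cs = G s"
    using type_dist_surj[OF td, of "G s"] prize_distD(4,5)[OF pG] by metis
  define b where "b = max ts cs"
  have g: "star_mechanism F G ts \<theta> s = (if \<theta> \<le> b then 1 else 0)" if th: "\<theta> \<in> {0..1} - {b}" for \<theta>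
    using star_mechanism_eq[OF td pG _ s, of \<theta> ts] th type_dist_less_iff(2)[OF td _ cs(1), of \<theta>] cs
    by (auto simp: b_def)
  obtain \<kappa> where kF: "0 \<le> \<kappa> * (I - max (F ts) (G s))"
    and klo: "\<And>\<theta>. \<theta> \<in> {0<..<1} \<Longrightarrow> \<theta> < b \<Longrightarrow> virtual_value F f \<theta> + l \<le> \<kappa>"
    and khi: "\<And>\<theta>. \<theta> \<in> {0<..<1} \<Longrightarrow> b < \<theta> \<Longrightarrow> \<kappa> \<le> virtual_value F f \<theta> + l"
  proof (cases "G s \<le> F ts")
    case True
    then have "b = ts" using type_dist_less_iff(2)[OF td cs(1) ts] cs by (simp add: b_def)
    then show ?thesis using that[of 0] H unfolding threshold_multiplier_def by auto
  next
    case False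
    then have "ts < cs" using type_dist_less_iff(1)[OF td ts cs(1)] cs by simp
    then obtain \<kappa> where "0 \<le> \<kappa>"
      "\<And>\<theta>. \<theta> \<in> {0<..<1} \<Longrightarrow> \<theta> < cs \<Longrightarrow> virtual_value F f \<theta> + l \<le> \<kappa>"
      "\<And>\<theta>. \<theta> \<in> {0<..<1} \<Longrightarrow> cs < \<theta> \<Longrightarrow> \<kappa> \<le> virtual_value F f \<theta> + l"
      using threshold_multiplier_shift[OF td mr H cs(1)] by blast
    moreover have "b = cs" "max (F ts) (G s) = G s" using \<open>ts < cs\<close> False by (auto simp: b_def)
    ultimately show ?thesis using that[of \<kappa>] GI by simp
  qed
  show thesis
  proof (rule that[OF kF])
    fix \<theta> y :: real assume th: "\<theta> \<in> {0<..<1} - {b}" and y: "0 \<le> y" "y \<le> 1"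
    then have th01: "\<theta> \<in> {0<..<1}" "\<theta> \<in> {0..1} - {b}" by auto
    show "0 \<le> (virtual_value F f \<theta> + l - \<kappa>) * (y - star_mechanism F G ts \<theta> s)"
    proof (cases "\<theta> < b")
      case True
      then show ?thesis using klo[OF th01(1) True] g[OF th01(2)] y by (simp add: mult_nonpos_nonpos)
    next
      case False
      then have "b < \<theta>" using th by auto
      with khi[OF th01(1)] show ?thesis using g[OF th01(2)] y by simp
    qed
  qed
qed

lemma star_mechanism_minimizes_slice:
  assumes td: "type_dist F f" and mr: "myerson_regular F f" and pG: "prize_dist G"
    and H: "threshold_multiplier F f l ts" and s: "s \<in> {0..1}"
    and h: "\<And>\<theta>. \<theta> \<in> {0..1} \<Longrightarrow> 0 \<le> h \<theta> \<and> h \<theta> \<le> 1"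
    and ifh: "(\<lambda>\<theta>. f \<theta> * h \<theta>) integrable_on {0..1}"
    and ich: "(\<lambda>\<theta>. (virtual_surplus F f \<theta> + l * f \<theta>) * h \<theta>) integrable_on {0..1}"
    and fh: "G s \<le> integral {0..1} (\<lambda>\<theta>. f \<theta> * h \<theta>)"
  shows "integral {0..1} (\<lambda>\<theta>. (virtual_surplus F f \<theta> + l * f \<theta>) * star_mechanism F G ts \<theta> s)
     \<le> integral {0..1} (\<lambda>\<theta>. (virtual_surplus F f \<theta> + l * f \<theta>) * h \<theta>)"
proof -
  define c where "c \<theta> = virtual_surplus F f \<theta> + l * f \<theta>" for \<theta>
  define g where "g \<theta> = star_mechanism F G ts \<theta> s" for \<theta>
  have ts: "ts \<in> {0..1}" using H unfolding threshold_multiplier_def by auto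
  obtain \<kappa> b where kF: "0 \<le> \<kappa> * (integral {0..1} (\<lambda>\<theta>. f \<theta> * h \<theta>) - max (F ts) (G s))"
    and sign: "\<And>\<theta> y. \<theta> \<in> {0<..<1} - {b} \<Longrightarrow> 0 \<le> y \<Longrightarrow> y \<le> 1 \<Longrightarrow>
      0 \<le> (virtual_value F f \<theta> + l - \<kappa>) * (y - star_mechanism F G ts \<theta> s)"
    using star_slice_multiplier[OF td mr pG H s fh] by blast
  have cc: "continuous_on {0..1} c" unfolding c_def
    using virtual_surplus_continuous[OF td] type_distD(4)[OF td] by (intro continuous_intros) auto
  have "integral {0..1} (\<lambda>\<theta>. c \<theta> * g \<theta>) - \<kappa> * integral {0..1} (\<lambda>\<theta>. f \<theta> * g \<theta>)
    \<le> integral {0..1} (\<lambda>\<theta>. c \<theta> * h \<theta>) - \<kappa> * integral {0..1} (\<lambda>\<theta>. f \<theta> * h \<theta>)"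
  proof (rule bathtub_inequality[where N="{0, 1, b}"])
    show "(\<lambda>\<theta>. c \<theta> * g \<theta>) integrable_on {0..1}"
      unfolding g_def by (rule continuous_times_star_mechanism_integrable[OF td pG cc])
    show "(\<lambda>\<theta>. f \<theta> * g \<theta>) integrable_on {0..1}"
      unfolding g_def by (rule continuous_times_star_mechanism_integrable[OF td pG type_distD(4)[OF td]])
    fix \<theta> assume th: "\<theta> \<in> {0..1} - {0, 1, b}"
    then have th1: "\<theta> \<in> {0<..<1} - {b}" by auto
    have "c \<theta> - \<kappa> * f \<theta> = f \<theta> * (virtual_value F f \<theta> + l - \<kappa>)"
      using virtual_surplus_eq[OF td mr, of \<theta>] th1 by (simp add: c_def algebra_simps)
    then show "0 \<le> (c \<theta> - \<kappa> * f \<theta>) * (h \<theta> - g \<theta>)"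
      using mult_nonneg_nonneg[OF less_imp_le[OF regular_density_pos[OF td mr, of \<theta>]] sign[OF th1, of "h \<theta>"]]
        h[of \<theta>] th1 by (simp add: g_def mult.assoc)
  qed (use ifh ich in \<open>simp_all add: c_def\<close>)
  moreover have "integral {0..1} (\<lambda>\<theta>. f \<theta> * g \<theta>) = max (F ts) (G s)"
    unfolding g_def using density_times_star_mechanism_has_integral[OF td pG ts s]
      by (simp add: integral_unique)
  ultimately show ?thesis using kF unfolding c_def g_def by (simp add: algebra_simps)
qed

lemma lagrangian_le_star:
  assumes td: "type_dist F f" and mr: "myerson_regular F f" and pG: "prize_dist G"
    and H: "threshold_multiplier F f l ts" and fe: "feasible f G m \<Gamma> t"
  defines "c \<equiv> \<lambda>\<theta>. virtual_surplus F f \<theta> + l * f \<theta>"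
  shows "integral {0..1} (\<lambda>\<theta>. c \<theta> * xG \<Gamma> \<theta>) \<le> integral {0..1} (\<lambda>\<theta>. c \<theta> * xstar F G ts \<theta>)"
proof (rule le_of_le_plus_div_nat[where c="2 * integral {0..1} (\<lambda>\<theta>. \<bar>c \<theta>\<bar>)"])
  fix n :: nat assume n: "n > 0"
  let ?y = "xstar F G ts" and ?s = "\<lambda>k. real (Suc k) / real n"
  have cdf: "\<forall>\<theta>\<in>{0..1}. cdf01 (\<Gamma> \<theta>)"
    and F1: "\<And>s. EF_ok f (\<lambda>\<theta>. \<Gamma> \<theta> s) \<and> EF f (\<lambda>\<theta>. \<Gamma> \<theta> s) \<ge> G s"
    and IC: "\<forall>\<theta>\<in>{0..1}. \<forall>\<theta>'\<in>{0..1}. \<theta> * xG \<Gamma> \<theta> - t \<theta> \<ge> \<theta> * xG \<Gamma> \<theta>' - t \<theta>'"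
    using fe unfolding feasible_def by auto
  have cc: "continuous_on {0..1} c" unfolding c_def
    using virtual_surplus_continuous[OF td] type_distD(4)[OF td] by (intro continuous_intros) auto
  have ic: "c integrable_on {0..1}" and iabs: "(\<lambda>\<theta>. \<bar>c \<theta>\<bar>) integrable_on {0..1}"
    using cc by (auto intro!: integrable_continuous_interval continuous_intros)
  have iG: "(\<lambda>\<theta>. c \<theta> * \<Gamma> \<theta> s) integrable_on {0..1}" for s
  proof (rule continuous_times_bounded_integrable[OF _ _ cc])
    show "(\<lambda>\<theta>. \<Gamma> \<theta> s) \<in> borel_measurable (lebesgue_on {0..1})"
      by (rule measurable_of_density_times_integrable[OF td mr]) (use F1[of s] in \<open>simp add: EF_ok_def\<close>)
    show "\<bar>\<Gamma> \<theta> s\<bar> \<le> 1" if "\<theta> \<in> {0..1}" for \<theta>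
      using cdf that cdf01_range by (metis abs_of_nonneg)
  qed
  note approx_\<Gamma> = integral_times_mean_approx[OF cdf ic iabs iG
      continuous_times_mono_integrable[OF IC_imp_mono_on[OF IC] cc] n]
  have xGy: "\<And>\<theta>. \<theta> \<in> {0..1} \<Longrightarrow> c \<theta> * xG (star_mechanism F G ts) \<theta> = c \<theta> * ?y \<theta>"
    using star_mechanism_cdf(2)[OF td pG] by simp
  have "(\<lambda>\<theta>. c \<theta> * xG (star_mechanism F G ts) \<theta>) integrable_on {0..1}"
    by (rule integrable_eq[OF continuous_times_mono_integrable[OF xstar_mono[OF td pG, of ts] cc]])
       (simp add: xGy)
  note approx_star = integral_times_mean_approx[OF _ ic iabs
      continuous_times_star_mechanism_integrable[OF td pG cc] this n]
  have "integral {0..1} (\<lambda>\<theta>. c \<theta> * xG (star_mechanism F G ts) \<theta>) = integral {0..1} (\<lambda>\<theta>. c \<theta> * ?y \<theta>)"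
    using xGy by (intro integral_cong) auto
  moreover have "(\<Sum>k<n. integral {0..1} (\<lambda>\<theta>. c \<theta> * star_mechanism F G ts \<theta> (?s k)))
     \<le> (\<Sum>k<n. integral {0..1} (\<lambda>\<theta>. c \<theta> * \<Gamma> \<theta> (?s k)))"
  proof (rule sum_mono)
    fix k assume "k \<in> {..<n}"
    then have sk: "?s k \<in> {0..1}" using n by auto
    have \<Gamma>01: "0 \<le> \<Gamma> \<theta> (?s k) \<and> \<Gamma> \<theta> (?s k) \<le> 1" if "\<theta> \<in> {0..1}" for \<theta>
      using cdf01_range[of "\<Gamma> \<theta>" "?s k"] cdf that by blast
    show "integral {0..1} (\<lambda>\<theta>. c \<theta> * star_mechanism F G ts \<theta> (?s k))
        \<le> integral {0..1} (\<lambda>\<theta>. c \<theta> * \<Gamma> \<theta> (?s k))"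
      using star_mechanism_minimizes_slice[where h="\<lambda>\<theta>. \<Gamma> \<theta> (?s k)", OF td mr pG H sk \<Gamma>01]
        F1[of "?s k"] iG[of "?s k"]
      unfolding c_def EF_ok_def EF_def by blast
  qed
  then have "(\<Sum>k<n. integral {0..1} (\<lambda>\<theta>. c \<theta> * star_mechanism F G ts \<theta> (?s k))) / real n
     \<le> (\<Sum>k<n. integral {0..1} (\<lambda>\<theta>. c \<theta> * \<Gamma> \<theta> (?s k))) / real n"
    by (simp add: divide_right_mono)
  ultimately show "integral {0..1} (\<lambda>\<theta>. c \<theta> * xG \<Gamma> \<theta>)
      \<le> integral {0..1} (\<lambda>\<theta>. c \<theta> * ?y \<theta>) + 2 * integral {0..1} (\<lambda>\<theta>. \<bar>c \<theta>\<bar>) / real n"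
    using approx_\<Gamma> approx_star star_mechanism_cdf(1)[OF td pG] by (simp add: abs_le_iff)
qed

lemma effort_le_lagrangian:
  assumes td: "type_dist F f" and mr: "myerson_regular F f" and pG: "prize_dist G"
    and H: "threshold_multiplier F f l ts" and fe: "feasible f G m \<Gamma> t"
  shows "EF f t \<le> integral {0..1} (\<lambda>\<theta>. virtual_surplus F f \<theta> * xstar F G ts \<theta>)
    + l * (EF f (xstar F G ts) - m)"
proof -
  define c where "c \<theta> = virtual_surplus F f \<theta> + l * f \<theta>" for \<theta>
  have l: "0 \<le> l" using H unfolding threshold_multiplier_def by auto
  have F2: "m \<le> EF f (xG \<Gamma>)"
    and IC: "\<forall>\<theta>\<in>{0..1}. \<forall>\<theta>'\<in>{0..1}. \<theta> * xG \<Gamma> \<theta> - t \<theta> \<ge> \<theta> * xG \<Gamma> \<theta>' - t \<theta>'"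
    using fe unfolding feasible_def by auto
  have split: "integral {0..1} (\<lambda>\<theta>. c \<theta> * z \<theta>)
      = integral {0..1} (\<lambda>\<theta>. virtual_surplus F f \<theta> * z \<theta>) + l * EF f z"
    if "mono_on {0..1} z" for z
  proof -
    have "integral {0..1} (\<lambda>\<theta>. c \<theta> * z \<theta>)
        = integral {0..1} (\<lambda>\<theta>. virtual_surplus F f \<theta> * z \<theta> + l * (f \<theta> * z \<theta>))"
      unfolding c_def by (simp add: algebra_simps)
    also have "\<dots> = integral {0..1} (\<lambda>\<theta>. virtual_surplus F f \<theta> * z \<theta>) + l * EF f z"
      unfolding EF_def
      by (subst integral_add) (auto intro!: integrable_on_mult_right continuous_times_mono_integrable[OF that]
          virtual_surplus_continuous[OF td] type_distD(4)[OF td])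
    finally show ?thesis .
  qed
  have "EF f t \<le> integral {0..1} (\<lambda>\<theta>. c \<theta> * xG \<Gamma> \<theta>) - l * EF f (xG \<Gamma>)"
    using effort_le_virtual_surplus[OF td fe] split[OF IC_imp_mono_on[OF IC]] by simp
  also have "\<dots> \<le> integral {0..1} (\<lambda>\<theta>. c \<theta> * xstar F G ts \<theta>) - l * m"
    using lagrangian_le_star[OF td mr pG H fe] mult_left_mono[OF F2 l] unfolding c_def by linarith
  also have "\<dots> = integral {0..1} (\<lambda>\<theta>. virtual_surplus F f \<theta> * xstar F G ts \<theta>) + l * (EF f (xstar F G ts) - m)"
    using split[OF xstar_mono[OF td pG]] by (simp add: algebra_simps)
  finally show ?thesis .
qed

section \<open>The optimal cutoff\<close>

definition neg_virtual_cutoff :: "(real \<Rightarrow> real) \<Rightarrow> (real \<Rightarrow> real) \<Rightarrow> real" where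
  "neg_virtual_cutoff F f = Sup ({0} \<union> {\<theta>\<in>{0<..<1}. virtual_value F f \<theta> < 0})"

definition cutoff_candidates :: "(real \<Rightarrow> real) \<Rightarrow> (real \<Rightarrow> real) \<Rightarrow> (real \<Rightarrow> real) \<Rightarrow> real \<Rightarrow> real set" where
  "cutoff_candidates F f G m = {ts\<in>{0..neg_virtual_cutoff F f}. m \<le> star_quality F f G ts}"

definition cutoff :: "(real \<Rightarrow> real) \<Rightarrow> (real \<Rightarrow> real) \<Rightarrow> (real \<Rightarrow> real) \<Rightarrow> real \<Rightarrow> real" where
  "cutoff F f G m = (if m = cdf_mean G then 0 else Sup (cutoff_candidates F f G m))"

lemma neg_virtual_cutoff:
  assumes mr: "myerson_regular F f"
  shows "neg_virtual_cutoff F f \<in> {0..1}" "threshold_multiplier F f 0 (neg_virtual_cutoff F f)"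
proof -
  let ?S = "{0} \<union> {\<theta>\<in>{0<..<1}. virtual_value F f \<theta> < 0}"
  have ne: "?S \<noteq> {}" and bdd: "bdd_above ?S" by (auto intro: bdd_aboveI[of _ 1])
  have z: "0 \<le> neg_virtual_cutoff F f" unfolding neg_virtual_cutoff_def by (rule cSup_upper[OF _ bdd]) simp
  have o: "neg_virtual_cutoff F f \<le> 1" unfolding neg_virtual_cutoff_def by (rule cSup_least[OF ne]) auto
  then show "neg_virtual_cutoff F f \<in> {0..1}" using z by simp
  have lo: "virtual_value F f \<theta> \<le> 0" if th: "\<theta> \<in> {0<..<1}" "\<theta> < neg_virtual_cutoff F f" for \<theta>
  proof -
    obtain y where y: "y \<in> ?S" "\<theta> < y"
      using th(2) less_cSup_iff[OF ne bdd] unfolding neg_virtual_cutoff_def by blast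
    then have "y \<in> {0<..<1}" "virtual_value F f y < 0" using th(1) by auto
    then show ?thesis using virtual_value_mono[OF mr th(1) \<open>y \<in> {0<..<1}\<close>] y(2) by simp
  qed
  have hi: "0 \<le> virtual_value F f \<theta>" if th: "\<theta> \<in> {0<..<1}" "neg_virtual_cutoff F f < \<theta>" for \<theta>
  proof (rule ccontr)
    assume "\<not> 0 \<le> virtual_value F f \<theta>"
    then have "\<theta> \<le> neg_virtual_cutoff F f"
      unfolding neg_virtual_cutoff_def using th by (intro cSup_upper[OF _ bdd]) auto
    then show False using th by simp
  qed
  show "threshold_multiplier F f 0 (neg_virtual_cutoff F f)"
    unfolding threshold_multiplier_def using z o lo hi by auto
qed

lemma cutoff_candidates_Sup:
  assumes td: "type_dist F f" and mr: "myerson_regular F f" and pG: "prize_dist G"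
    and m: "m < cdf_mean G"
  defines "T \<equiv> Sup (cutoff_candidates F f G m)"
  shows "T \<in> cutoff_candidates F f G m" "T < neg_virtual_cutoff F f \<Longrightarrow> star_quality F f G T = m"
proof -
  let ?c = "neg_virtual_cutoff F f" and ?S = "cutoff_candidates F f G m" and ?R = "star_quality F f G"
  have c01: "?c \<in> {0..1}" using neg_virtual_cutoff(1)[OF mr] .
  have Rc: "continuous_on {0..?c} ?R"
    by (rule continuous_on_subset[OF star_quality_continuous[OF td pG]]) (use c01 in auto)
  have "0 \<in> ?S" unfolding cutoff_candidates_def using c01 star_quality_0[OF td pG] m by auto
  moreover have "bdd_above ?S" unfolding cutoff_candidates_def by (rule bdd_aboveI[of _ ?c]) auto
  moreover have "closed ?S"
    unfolding cutoff_candidates_def by (rule continuous_on_closed_Collect_le[OF continuous_on_const Rc]) simp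
  ultimately show T: "T \<in> ?S" unfolding T_def by (intro closed_contains_Sup) auto
  assume "T < ?c"
  have "?c \<notin> ?S"
  proof
    assume "?c \<in> ?S"
    then have "?c \<le> T" unfolding T_def by (rule cSup_upper[OF _ \<open>bdd_above ?S\<close>])
    then show False using \<open>T < ?c\<close> by simp
  qed
  then have "?R ?c < m" using c01 unfolding cutoff_candidates_def by auto
  moreover have "m \<le> ?R T" "T \<in> {0..?c}" using T unfolding cutoff_candidates_def by auto
  moreover have "continuous_on {T..?c} ?R"
    by (rule continuous_on_subset[OF Rc]) (use \<open>T \<in> {0..?c}\<close> in auto)
  ultimately obtain y where y: "T \<le> y" "y \<le> ?c" "?R y = m"
    using IVT2'[of ?R ?c m T] \<open>T < ?c\<close> by auto
  then have "y \<in> ?S" using \<open>T \<in> {0..?c}\<close> unfolding cutoff_candidates_def by auto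
  then have "y \<le> T" unfolding T_def by (rule cSup_upper[OF _ \<open>bdd_above ?S\<close>])
  then show "?R T = m" using y by simp
qed

lemma cutoff_in_candidates:
  assumes td: "type_dist F f" and mr: "myerson_regular F f" and pG: "prize_dist G"
    and m: "m \<in> {0..cdf_mean G}"
  shows "cutoff F f G m \<in> {0..neg_virtual_cutoff F f} \<and> m \<le> star_quality F f G (cutoff F f G m)"
proof (cases "m = cdf_mean G")
  case True
  then show ?thesis using neg_virtual_cutoff(1)[OF mr] star_quality_0[OF td pG] by (auto simp: cutoff_def)
next
  case False
  then have "cutoff F f G m \<in> cutoff_candidates F f G m"
    using cutoff_candidates_Sup(1)[OF td mr pG] m by (simp add: cutoff_def)
  then show ?thesis unfolding cutoff_candidates_def by auto
qed

lemma cutoff_range: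
  assumes "type_dist F f" "myerson_regular F f" "prize_dist G" "m \<in> {0..cdf_mean G}"
  shows "cutoff F f G m \<in> {0..1}"
  using cutoff_in_candidates[OF assms] neg_virtual_cutoff(1)[OF assms(2)] by auto

lemma cutoff_antimono:
  assumes td: "type_dist F f" and mr: "myerson_regular F f" and pG: "prize_dist G"
    and m: "m1 \<in> {0..cdf_mean G}" "m2 \<in> {0..cdf_mean G}" "m1 \<le> m2"
  shows "cutoff F f G m2 \<le> cutoff F f G m1"
proof (cases "m2 = cdf_mean G")
  case True
  then show ?thesis using cutoff_range[OF td mr pG m(1)] by (simp add: cutoff_def)
next
  case False
  then have "m1 \<noteq> cdf_mean G" "m2 < cdf_mean G" using m by auto
  moreover have "cutoff_candidates F f G m2 \<subseteq> cutoff_candidates F f G m1"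
    unfolding cutoff_candidates_def using m(3) by auto
  moreover have "bdd_above (cutoff_candidates F f G m1)"
    unfolding cutoff_candidates_def by (rule bdd_aboveI[of _ "neg_virtual_cutoff F f"]) auto
  moreover have "cutoff_candidates F f G m2 \<noteq> {}"
    using cutoff_candidates_Sup(1)[OF td mr pG \<open>m2 < cdf_mean G\<close>] by blast
  ultimately show ?thesis unfolding cutoff_def using False by (simp add: cSup_subset_mono)
qed

lemma effort_le_star_effort_at_mean:
  assumes td: "type_dist F f" and mr: "myerson_regular F f" and pG: "prize_dist G"
    and fe: "feasible f G (cdf_mean G) \<Gamma> t"
  shows "EF f t \<le> star_effort F f G 0"
proof -
  let ?c = "neg_virtual_cutoff F f"
  have c01: "?c \<in> {0..1}" and H0: "threshold_multiplier F f 0 ?c" using neg_virtual_cutoff[OF mr] by auto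
  show ?thesis
  proof (cases "?c = 0")
    case True
    then show ?thesis using effort_le_lagrangian[OF td mr pG H0 fe] unfolding star_effort_def by simp
  next
    case False
    obtain C where C: "\<And>ts. ts \<in> {0..1} \<Longrightarrow> star_effort F f G ts \<le> star_effort F f G 0 + C * ts"
      using star_effort_le_linear[OF td pG] by blast
    show ?thesis
    proof (rule le_of_le_plus_div_nat[where c="C * ?c / 2"])
      fix n :: nat assume n: "n > 0"
      define ts where "ts = ?c / (2 * real n)"
      have "ts \<le> ?c / 2" unfolding ts_def by (rule divide_left_mono) (use n c01 in auto)
      then have ts: "ts \<in> {0<..<1}" "ts < ?c" using False c01 n by (auto simp: ts_def)
      then have v: "virtual_value F f ts \<le> 0" using H0 unfolding threshold_multiplier_def by auto
      obtain M where M: "\<And>\<theta>. \<theta> \<in> {0..1} \<Longrightarrow> \<bar>f \<theta>\<bar> \<le> M"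
        using type_dist_density_bounded[OF td] by blast
      have "star_quality F f G ts \<le> star_quality F f G 0"
        using star_quality_lipschitz(2)[OF td pG M, of 0 ts] ts by simp
      then have "- virtual_value F f ts * (star_quality F f G ts - cdf_mean G) \<le> 0"
        using v star_quality_0[OF td pG] by (intro mult_nonneg_nonpos) auto
      then have "EF f t \<le> star_effort F f G ts"
        using effort_le_lagrangian[OF td mr pG threshold_multiplier_at[OF mr ts(1) v] fe]
        unfolding star_effort_def star_quality_def by simp
      also have "\<dots> \<le> star_effort F f G 0 + C * ?c / 2 / real n"
        using C[of ts] ts by (simp add: ts_def)
      finally show "EF f t \<le> star_effort F f G 0 + C * ?c / 2 / real n" .
    qed
  qed
qed

lemma cutoff_optimal:
  assumes td: "type_dist F f" and mr: "myerson_regular F f" and pG: "prize_dist G"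
    and m: "m \<in> {0..cdf_mean G}" and fe: "feasible f G m \<Gamma> t"
  shows "EF f t \<le> star_effort F f G (cutoff F f G m)"
proof (cases "m = cdf_mean G")
  case True
  then show ?thesis using effort_le_star_effort_at_mean[OF td mr pG] fe by (simp add: cutoff_def)
next
  case False
  let ?c = "neg_virtual_cutoff F f" and ?T = "cutoff F f G m"
  have c01: "?c \<in> {0..1}" and H0: "threshold_multiplier F f 0 ?c" using neg_virtual_cutoff[OF mr] by auto
  have mlt: "m < cdf_mean G" using m False by simp
  have T: "?T = Sup (cutoff_candidates F f G m)" using False by (simp add: cutoff_def)
  have "?T \<in> {0..?c}" using cutoff_in_candidates[OF td mr pG m] by simp
  then consider "?T = ?c" | "?T < ?c" by fastforce
  then show ?thesis
  proof cases
    case 1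
    then show ?thesis using effort_le_lagrangian[OF td mr pG H0 fe] unfolding star_effort_def by simp
  next
    case 2
    then have RT: "star_quality F f G ?T = m" using cutoff_candidates_Sup(2)[OF td mr pG mlt] T by simp
    then have "?T \<noteq> 0" using star_quality_0[OF td pG] mlt by auto
    then have Tin: "?T \<in> {0<..<1}" using \<open>?T \<in> {0..?c}\<close> 2 c01 by auto
    then have "virtual_value F f ?T \<le> 0" using H0 2 unfolding threshold_multiplier_def by auto
    from effort_le_lagrangian[OF td mr pG threshold_multiplier_at[OF mr Tin this] fe]
    show ?thesis using RT unfolding star_effort_def star_quality_def by simp
  qed
qed

lemma cutoff_binding:
  assumes td: "type_dist F f" and mr: "myerson_regular F f" and pG: "prize_dist G"
    and m: "m \<in> {0..cdf_mean G}" and slack: "- m < I_Ginv G (F (cutoff F f G 0))"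
  shows "star_quality F f G (cutoff F f G m) = m"
proof (cases "m = cdf_mean G")
  case True
  then show ?thesis using star_quality_0[OF td pG] by (simp add: cutoff_def)
next
  case False
  let ?c = "neg_virtual_cutoff F f" and ?T = "cutoff F f G m"
  have c01: "?c \<in> {0..1}" using neg_virtual_cutoff[OF mr] by auto
  have mlt: "m < cdf_mean G" using m False by simp
  obtain M where M: "\<And>\<theta>. \<theta> \<in> {0..1} \<Longrightarrow> \<bar>f \<theta>\<bar> \<le> M"
    using type_dist_density_bounded[OF td] by blast
  have "0 \<le> star_quality F f G ts" if "ts \<in> {0..?c}" for ts
    using star_quality_lipschitz(1)[OF td pG M, of 0 ts] that c01 by simp
  then have "cutoff_candidates F f G 0 = {0..?c}" unfolding cutoff_candidates_def by auto
  then have "cutoff F f G 0 = ?c" using mlt m c01 by (simp add: cutoff_def)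
  then have "star_quality F f G ?c < m"
    using slack I_Ginv_eq[OF pG] EF_xstar_eq_integral_qinv[OF td pG c01] type_dist_range[OF td, of ?c] c01
    unfolding star_quality_def by simp
  moreover have "?T \<in> cutoff_candidates F f G m"
    using cutoff_candidates_Sup(1)[OF td mr pG mlt] False by (simp add: cutoff_def)
  ultimately have "?T < ?c" unfolding cutoff_candidates_def by (cases "?T = ?c") auto
  then show ?thesis using cutoff_candidates_Sup(2)[OF td mr pG mlt] False by (simp add: cutoff_def)
qed

theorem proposition5:
  fixes F f G :: "real \<Rightarrow> real"
  assumes "type_dist F f"
    and "prize_dist G"
    and "myerson_regular F f"
  shows "\<exists>ts :: real \<Rightarrow> real.
     (\<forall>m\<in>{0..cdf_mean G}. ts m \<in> {0..1} \<and>
        (\<exists>\<Gamma> t. feasible f G m \<Gamma> t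
           \<and> (\<forall>\<theta>\<in>{0..1}. xG \<Gamma> \<theta> = xstar F G (ts m) \<theta>)
           \<and> (\<forall>\<Gamma>' t'. feasible f G m \<Gamma>' t' \<longrightarrow> EF f t' \<le> EF f t)))
   \<and> ts (cdf_mean G) = 0
   \<and> (\<forall>m1\<in>{0..cdf_mean G}. \<forall>m2\<in>{0..cdf_mean G}. m1 \<le> m2 \<longrightarrow> ts m2 \<le> ts m1)
   \<and> (\<forall>m\<in>{0..cdf_mean G}. I_Ginv G (F (ts 0)) > - m \<longrightarrow>
        EF f (xstar F G (ts m)) = m)"
proof -
  note td = assms(1) and pG = assms(2) and mr = assms(3)
  let ?ts = "cutoff F f G"
  have optimal: "feasible f G m (star_mechanism F G (?ts m)) (envelope_transfer (xstar F G (?ts m)))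
      \<and> (\<forall>\<theta>\<in>{0..1}. xG (star_mechanism F G (?ts m)) \<theta> = xstar F G (?ts m) \<theta>)
      \<and> (\<forall>\<Gamma>' t'. feasible f G m \<Gamma>' t' \<longrightarrow> EF f t' \<le> EF f (envelope_transfer (xstar F G (?ts m))))"
    if m: "m \<in> {0..cdf_mean G}" for m
    using feasible_star_mechanism[OF td pG cutoff_range[OF td mr pG m]] cutoff_in_candidates[OF td mr pG m]
      star_mechanism_cdf(2)[OF td pG] cutoff_optimal[OF td mr pG m]
      EF_envelope_transfer(2)[OF td xstar_mono[OF td pG]]
    unfolding star_quality_def star_effort_def by auto
  show ?thesis
  proof (intro exI[of _ ?ts] conjI ballI impI)
    fix m assume m: "m \<in> {0..cdf_mean G}"
    show "?ts m \<in> {0..1}" by (rule cutoff_range[OF td mr pG m])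
    show "\<exists>\<Gamma> t. feasible f G m \<Gamma> t \<and> (\<forall>\<theta>\<in>{0..1}. xG \<Gamma> \<theta> = xstar F G (?ts m) \<theta>)
        \<and> (\<forall>\<Gamma>' t'. feasible f G m \<Gamma>' t' \<longrightarrow> EF f t' \<le> EF f t)"
      using optimal[OF m] by blast
    show "- m < I_Ginv G (F (?ts 0)) \<Longrightarrow> EF f (xstar F G (?ts m)) = m"
      using cutoff_binding[OF td mr pG m] unfolding star_quality_def .
  next
    fix m1 m2 assume "m1 \<in> {0..cdf_mean G}" "m2 \<in> {0..cdf_mean G}" "m1 \<le> m2"
    then show "?ts m2 \<le> ?ts m1" by (rule cutoff_antimono[OF td mr pG])
  qed (simp add: cutoff_def)
qed

end
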